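(* Let $n \ge d \ge 1$, let $A$ be a real $n\times n$ matrix and $C$ a real $d\times n$ matrix such that $A$ is stable (all eigenvalues of modulus $<1$) and the output pair $(A,C)$ is observable. Then $(A,C)$ is similar to a real OTSON pair, to a real HOON pair, and to a real output normal pair $(\tilde A,\tilde C)$ in which $\tilde A$ is in ordered real Schur form with all $2\times 2$ diagonal blocks in qd block form.
   Context: Two output pairs $(A,C)$ and $(\tilde A,\tilde C)$ are similar if there is an invertible real $n\times n$ matrix $T$ with $\tilde A=T^{-1}AT$ and $\tilde C=CT$. The pair $(A,C)$ is output normal (ON) if $A^{*}A=\mathbb{I}_n-C^{*}C$ (here ${}^*$ denotes transpose). Let $Q=\begin{pmatrix} C\\ A\end{pmatrix}$ be the $(n+d)\times n$ stack. The pair is in observer triangular system (OTS) form if $Q_{i,j}=0$ for $j>i$; it is OTSON if it is in OTS form and output normal. The pair is in Hessenberg observer (HO) form if $A$ is upper Hessenberg ($A_{i,j}=0$ for $i>j+1$) and $C_{1,j}=0$ for $j>1$; it is HOON if it is in HO form and output normal. A real matrix $A$ is in real Schur form if it is block upper triangular with diagonal blocks $Z_1,\dots,Z_M$ (in this order along the diagonal), where $Z_1,\dots,Z_\ell$ are $2\times 2$ real blocks each having a pair of non-real complex conjugate eigenvalues and $Z_{\ell+1},\dots,Z_M$ are $1\times 1$ real blocks ($M=n-\ell$). Writing $\lambda^{(k)}$ for an eigenvalue of $Z_k$, $A$ is in ordered real Schur form if (1) $|\lambda^{(i)}|\le|\lambda^{(j)}|$ whenever $i<j\le \ell$ or $\ell<i<j\le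 M$, and (2) if in such a case $|\lambda^{(i)}|=|\lambda^{(j)}|$ then $\operatorname{Re}\lambda^{(j)}\le \operatorname{Re}\lambda^{(i)}$. A $2\times 2$ block $Z$ is in qd block form if $Z=\begin{pmatrix} c& s\\ -s & c\end{pmatrix}\begin{pmatrix} d_1&0\\0&d_2\end{pmatrix}$ with $c^2+s^2=1$, $s\ge 0$ and $d_1\ge d_2\ge 0$. *)

theory Defs
  imports Complex_Main "Jordan_Normal_Form.Char_Poly"
begin

(* Matrices are Jordan_Normal_Form matrices, 0-based indices.
   A is n x n, C is d x n. *)

definition stable_mat :: "real mat \<Rightarrow> bool" where
  "stable_mat A \<longleftrightarrow> (\<forall>\<mu>. eigenvalue (map_mat complex_of_real A) \<mu> \<longrightarrow> cmod \<mu> < 1)"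

definition observable :: "nat \<Rightarrow> real mat \<Rightarrow> real mat \<Rightarrow> bool" where
  "observable n A C \<longleftrightarrow>
     (\<forall>v \<in> carrier_vec n. (\<forall>k<n. (C * A ^\<^sub>m k) *\<^sub>v v = 0\<^sub>v (dim_row C)) \<longrightarrow> v = 0\<^sub>v n)"

definition similar_pair :: "nat \<Rightarrow> real mat \<Rightarrow> real mat \<Rightarrow> real mat \<Rightarrow> real mat \<Rightarrow> bool" where
  "similar_pair n A C A' C' \<longleftrightarrow>
     (\<exists>T Ti. T \<in> carrier_mat n n \<and> Ti \<in> carrier_mat n n \<and> T * Ti = 1\<^sub>m n \<and> Ti * T = 1\<^sub>m n \<and>
             A' = Ti * A * T \<and> C' = C * T)"

definition output_normal :: "nat \<Rightarrow> real mat \<Rightarrow> real mat \<Rightarrow> bool" where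
  "output_normal n A C \<longleftrightarrow> transpose_mat A * A = 1\<^sub>m n - transpose_mat C * C"

(* entries of the stacked matrix Q = [C; A], size (n+d) x n *)
definition stackQ :: "nat \<Rightarrow> real mat \<Rightarrow> real mat \<Rightarrow> nat \<Rightarrow> nat \<Rightarrow> real" where
  "stackQ d A C i j = (if i < d then C $$ (i, j) else A $$ (i - d, j))"

definition OTS_form :: "nat \<Rightarrow> nat \<Rightarrow> real mat \<Rightarrow> real mat \<Rightarrow> bool" where
  "OTS_form n d A C \<longleftrightarrow> (\<forall>i j. i < n + d \<longrightarrow> j < n \<longrightarrow> i < j \<longrightarrow> stackQ d A C i j = 0)"

definition OTSON :: "nat \<Rightarrow> nat \<Rightarrow> real mat \<Rightarrow> real mat \<Rightarrow> bool" where
  "OTSON n d A C \<longleftrightarrow> OTS_form n d A C \<and> output_normal n A C"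

definition HO_form :: "nat \<Rightarrow> real mat \<Rightarrow> real mat \<Rightarrow> bool" where
  "HO_form n A C \<longleftrightarrow>
     (\<forall>i j. i < n \<longrightarrow> j < n \<longrightarrow> j + 1 < i \<longrightarrow> A $$ (i, j) = 0) \<and>
     (\<forall>j. 0 < j \<longrightarrow> j < n \<longrightarrow> C $$ (0, j) = 0)"

definition HOON :: "nat \<Rightarrow> real mat \<Rightarrow> real mat \<Rightarrow> bool" where
  "HOON n A C \<longleftrightarrow> HO_form n A C \<and> output_normal n A C"

(* Block structure with l leading 2x2 blocks (rows 2k,2k+1 for k<l) followed by
   1x1 blocks (row k+l for block k, l \<le> k < n-l). blk l i = index of block containing row i. *)
definition blk :: "nat \<Rightarrow> nat \<Rightarrow> nat" where
  "blk l i = (if i < 2 * l then i div 2 else i - l)"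

(* the k-th diagonal block Z_(k+1) *)
definition diag_block :: "real mat \<Rightarrow> nat \<Rightarrow> nat \<Rightarrow> real mat" where
  "diag_block A l k =
     (if k < l then mat 2 2 (\<lambda>(i, j). A $$ (2 * k + i, 2 * k + j))
      else mat 1 1 (\<lambda>_. A $$ (k + l, k + l)))"

definition block_eigenvalue :: "real mat \<Rightarrow> nat \<Rightarrow> nat \<Rightarrow> complex \<Rightarrow> bool" where
  "block_eigenvalue A l k \<mu> \<longleftrightarrow> eigenvalue (map_mat complex_of_real (diag_block A l k)) \<mu>"

definition real_schur_blocks :: "nat \<Rightarrow> nat \<Rightarrow> real mat \<Rightarrow> bool" where
  "real_schur_blocks n l A \<longleftrightarrow> A \<in> carrier_mat n n \<and> 2 * l \<le> n \<and>
     (\<forall>i j. i < n \<longrightarrow> j < n \<longrightarrow> blk l j < blk l i \<longrightarrow> A $$ (i, j) = 0) \<and>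
     (\<forall>k<l. \<forall>\<mu>. block_eigenvalue A l k \<mu> \<longrightarrow> Im \<mu> \<noteq> 0)"

(* ordering conditions (1),(2); blocks are indexed 0..M-1 with M = n - l *)
definition ordered_blocks :: "nat \<Rightarrow> nat \<Rightarrow> real mat \<Rightarrow> bool" where
  "ordered_blocks n l A \<longleftrightarrow>
     (\<forall>i j. ((i < j \<and> j < l) \<or> (l \<le> i \<and> i < j \<and> j < n - l)) \<longrightarrow>
        (\<forall>\<mu>i \<mu>j. block_eigenvalue A l i \<mu>i \<longrightarrow> block_eigenvalue A l j \<mu>j \<longrightarrow>
           cmod \<mu>i \<le> cmod \<mu>j \<and> (cmod \<mu>i = cmod \<mu>j \<longrightarrow> Re \<mu>j \<le> Re \<mu>i)))"

definition ordered_real_schur :: "nat \<Rightarrow> nat \<Rightarrow> real mat \<Rightarrow> bool" where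
  "ordered_real_schur n l A \<longleftrightarrow> real_schur_blocks n l A \<and> ordered_blocks n l A"

definition qd_block :: "real mat \<Rightarrow> bool" where
  "qd_block Z \<longleftrightarrow> (\<exists>c s d1 d2. c\<^sup>2 + s\<^sup>2 = 1 \<and> s \<ge> 0 \<and> d1 \<ge> d2 \<and> d2 \<ge> 0 \<and>
      Z = mat_of_rows_list 2 [[c, s], [-s, c]] * mat_of_rows_list 2 [[d1, 0], [0, d2]])"

end

theory Submission
  imports Defs "Jordan_Normal_Form.Spectral_Radius"
begin

text \<open>Since \<open>A\<close> is stable, the observability Gramian \<open>G = \<Sum>\<^sub>k (C A\<^sup>k)\<^sup>T (C A\<^sup>k)\<close>
  converges and satisfies the Stein equation \<open>A\<^sup>T G A + C\<^sup>T C = G\<close>; observability makes it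
  positive definite. If the columns of \<open>T\<close> are orthonormal for the inner product
  \<open>\<langle>x, y\<rangle> = x\<^sup>T G y\<close>, then \<open>T\<^sup>-\<^sup>1 = T\<^sup>T G\<close> and the Stein equation turns into output normality
  of \<open>(T\<^sup>-\<^sup>1 A T, C T)\<close>. The OTS and HO shapes are zero patterns of the entries
  \<open>\<langle>t\<^sub>i, A t\<^sub>j\<rangle>\<close> and \<open>(C t\<^sub>j)\<^sub>i\<close>, and are obtained by building the orthonormal basis
  \<open>t\<^sub>1, \<dots>, t\<^sub>n\<close> one vector at a time, each orthogonal to one further prescribed vector.
  For the Schur form, \<open>T Q\<close> is again such a basis for every orthogonal \<open>Q\<close>, so it suffices
  to bring \<open>T\<^sup>-\<^sup>1 A T\<close> into ordered real Schur form by an orthogonal similarity; this is the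
  usual deflation argument, choosing at each step an eigenvalue of least modulus and rotating
  every \<open>2\<times>2\<close> block into its polar form \<open>rotation \<times> diagonal\<close>.\<close>

lemma suminf_double_sum_swap:
  fixes f :: "nat \<Rightarrow> nat \<Rightarrow> nat \<Rightarrow> real"
  assumes "\<And>i j. i < n \<Longrightarrow> j < m \<Longrightarrow> summable (\<lambda>k. f k i j)"
  shows "(\<Sum>i<n. \<Sum>j<m. a i j * (\<Sum>k. f k i j)) = (\<Sum>k. \<Sum>i<n. \<Sum>j<m. a i j * f k i j)"
    and "summable (\<lambda>k. \<Sum>i<n. \<Sum>j<m. a i j * f k i j)"
proof -
  have s: "\<And>i j. i < n \<Longrightarrow> j < m \<Longrightarrow> summable (\<lambda>k. a i j * f k i j)"
    using assms summable_mult by blast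
  have "(\<Sum>i<n. \<Sum>j<m. a i j * (\<Sum>k. f k i j)) = (\<Sum>i<n. \<Sum>j<m. (\<Sum>k. a i j * f k i j))"
    by (intro sum.cong refl, rule suminf_mult[symmetric], rule assms, simp_all)
  also have "\<dots> = (\<Sum>i<n. (\<Sum>k. \<Sum>j<m. a i j * f k i j))"
    by (intro sum.cong refl, subst suminf_sum, auto simp: assms)
  also have "\<dots> = (\<Sum>k. \<Sum>i<n. \<Sum>j<m. a i j * f k i j)"
    by (subst suminf_sum, auto intro!: summable_sum s)
  finally show "(\<Sum>i<n. \<Sum>j<m. a i j * (\<Sum>k. f k i j)) = (\<Sum>k. \<Sum>i<n. \<Sum>j<m. a i j * f k i j)" .
  show "summable (\<lambda>k. \<Sum>i<n. \<Sum>j<m. a i j * f k i j)"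
    by (auto intro!: summable_sum s)
qed

lemma index_mult_mat_triple:
  fixes L M R :: "'a :: comm_ring_1 mat"
  assumes "L \<in> carrier_mat p n" "M \<in> carrier_mat n n" "R \<in> carrier_mat n q" "i < p" "j < q"
  shows "(L * M * R) $$ (i,j) = (\<Sum>a<n. \<Sum>b<n. (L $$ (i,a) * R $$ (b,j)) * M $$ (a,b))"
  using assms
  by (simp add: scalar_prod_def sum_distrib_left sum_distrib_right atLeast0LessThan,
      intro sum.cong refl, simp add: ac_simps)

lemma scalar_prod_mult_mat_vec_double_sum:
  fixes M :: "'a :: comm_ring_1 mat"
  assumes "M \<in> carrier_mat n n" "x \<in> carrier_vec n" "y \<in> carrier_vec n"
  shows "x \<bullet> (M *\<^sub>v y) = (\<Sum>a<n. \<Sum>b<n. (x $ a * y $ b) * M $$ (a,b))"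
  using assms
  by (simp add: scalar_prod_def sum_distrib_left atLeast0LessThan ac_simps)

lemma index_congruence_mat:
  fixes T M :: "real mat"
  assumes T: "T \<in> carrier_mat n n" and M: "M \<in> carrier_mat n n" and ij: "i < n" "j < n"
  shows "(transpose_mat T * M * T) $$ (i,j) = col T i \<bullet> (M *\<^sub>v col T j)"
  by (subst index_mult_mat_triple[of _ n n M _ n], insert assms, auto simp: scalar_prod_mult_mat_vec_double_sum[OF M] ac_simps)

lemma smult_mat_pow:
  fixes X :: "'a :: comm_ring_1 mat"
  assumes "X \<in> carrier_mat n n"
  shows "(c \<cdot>\<^sub>m X) ^\<^sub>m k = (c ^ k) \<cdot>\<^sub>m (X ^\<^sub>m k)"
proof (induct k)
  case 0 then show ?case using assms by (auto intro!: eq_matI)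
next
  case (Suc k)
  have "(c \<cdot>\<^sub>m X) ^\<^sub>m Suc k = ((c ^ k) \<cdot>\<^sub>m (X ^\<^sub>m k)) * (c \<cdot>\<^sub>m X)" using Suc by simp
  also have "\<dots> = (c ^ Suc k) \<cdot>\<^sub>m (X ^\<^sub>m Suc k)"
    using assms by (auto simp: mult_smult_assoc_mat mult_smult_distrib ac_simps)
  finally show ?case .
qed

lemma scalar_prod_self_pos:
  fixes v :: "real vec"
  assumes "v \<in> carrier_vec n" "v \<noteq> 0\<^sub>v n"
  shows "v \<bullet> v > 0"
proof -
  from assms obtain i where i: "i < n" "v $ i \<noteq> 0" by (auto simp: vec_eq_iff)
  have "v \<bullet> v = (\<Sum>j\<in>{0..<n}. (v $ j)^2)" using assms by (simp add: scalar_prod_def power2_eq_square)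
  also have "\<dots> > 0"
    by (rule sum_pos2[of _ i], insert i, auto)
  finally show ?thesis .
qed

lemma scalar_prod_self_nonneg:
  fixes v :: "real vec"
  shows "v \<bullet> v \<ge> 0"
  by (simp add: scalar_prod_def sum_nonneg)

lemma norm_bound_transpose: "norm_bound X b \<Longrightarrow> norm_bound (transpose_mat X) b"
  unfolding norm_bound_def by auto

lemma stable_mat_pow_decay:
  fixes A :: "real mat"
  assumes A: "A \<in> carrier_mat n n" and st: "stable_mat A" and n: "0 < n"
  shows "\<exists>c r. 0 < r \<and> r < 1 \<and> (\<forall>k i j. i < n \<longrightarrow> j < n \<longrightarrow> \<bar>(A ^\<^sub>m k) $$ (i,j)\<bar> \<le> c * r ^ k)"
proof -
  define cA where "cA = map_mat complex_of_real A"
  have cA: "cA \<in> carrier_mat n n" using A unfolding cA_def by auto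
  define \<rho> where "\<rho> = spectral_radius cA"
  from spectral_radius_mem_max(1)[OF cA n] obtain \<mu> where mu: "\<mu> \<in> spectrum cA" and rho: "\<rho> = norm \<mu>"
    unfolding \<rho>_def by auto
  have "\<rho> < 1" using st mu rho unfolding stable_mat_def spectrum_def cA_def by auto
  have "0 \<le> \<rho>" using rho by auto
  define r where "r = (1 + \<rho>) / 2"
  have r: "0 < r" "r < 1" "\<rho> < r" using \<open>\<rho> < 1\<close> \<open>0 \<le> \<rho>\<close> unfolding r_def by auto
  define B where "B = complex_of_real (1/r) \<cdot>\<^sub>m cA"
  have B: "B \<in> carrier_mat n n" using cA unfolding B_def by auto
  have evB: "norm \<nu> < 1" if ev: "eigenvalue B \<nu>" for \<nu>
  proof -
    from ev obtain v where v: "v \<in> carrier_vec n" "v \<noteq> 0\<^sub>v n" "B *\<^sub>v v = \<nu> \<cdot>\<^sub>v v"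
      unfolding eigenvalue_def eigenvector_def using B by auto
    have "cA *\<^sub>v v = complex_of_real r \<cdot>\<^sub>v (B *\<^sub>v v)"
      unfolding B_def using cA v r by (auto intro!: eq_vecI simp: scalar_prod_def sum_distrib_left)
    also have "\<dots> = (complex_of_real r * \<nu>) \<cdot>\<^sub>v v" using v by (auto intro!: eq_vecI)
    finally have "eigenvalue cA (complex_of_real r * \<nu>)"
      unfolding eigenvalue_def eigenvector_def using v cA by auto
    hence "norm (complex_of_real r * \<nu>) \<le> \<rho>"
      using spectral_radius_mem_max(2)[OF cA n] unfolding \<rho>_def spectrum_def by auto
    hence "r * norm \<nu> \<le> \<rho>" using r by (simp add: norm_mult)
    hence "r * norm \<nu> < r * 1" using r by linarith
    thus ?thesis using r by (simp add: mult_less_cancel_left_pos)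
  qed
  from spectral_radius_mem_max(1)[OF B n] evB have "spectral_radius B < 1"
    unfolding spectrum_def by auto
  from spectral_radius_jnf_norm_bound_less_1_upper_triangular[OF B this]
  obtain c where c: "\<And>k. norm_bound (B ^\<^sub>m k) c" by auto
  have "\<bar>(A ^\<^sub>m k) $$ (i,j)\<bar> \<le> c * r ^ k" if ij: "i < n" "j < n" for k i j
  proof -
    have "cA = complex_of_real r \<cdot>\<^sub>m B" unfolding B_def using cA r by (auto intro!: eq_matI)
    hence "cA ^\<^sub>m k = (complex_of_real r ^ k) \<cdot>\<^sub>m (B ^\<^sub>m k)" using smult_mat_pow[OF B] by simp
    moreover have "cA ^\<^sub>m k = map_mat complex_of_real (A ^\<^sub>m k)"
      unfolding cA_def by (rule of_real_hom.mat_hom_pow[OF A, symmetric])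
    ultimately have "complex_of_real ((A ^\<^sub>m k) $$ (i,j)) = complex_of_real r ^ k * (B ^\<^sub>m k) $$ (i,j)"
      using ij A B by (metis carrier_matD index_map_mat index_smult_mat pow_carrier_mat)
    hence "\<bar>(A ^\<^sub>m k) $$ (i,j)\<bar> = r ^ k * norm ((B ^\<^sub>m k) $$ (i,j))"
      using r by (metis abs_of_pos norm_mult norm_of_real norm_power)
    also have "\<dots> \<le> r ^ k * c" using c[of k] ij B r unfolding norm_bound_def
      by (intro mult_left_mono, auto)
    finally show ?thesis by (simp add: ac_simps)
  qed
  thus ?thesis using r by blast
qed

section \<open>Observability Gramian\<close>

definition obs_term :: "real mat \<Rightarrow> real mat \<Rightarrow> nat \<Rightarrow> real mat" where
  "obs_term A C k = transpose_mat (C * A ^\<^sub>m k) * (C * A ^\<^sub>m k)"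

definition obs_gramian :: "nat \<Rightarrow> real mat \<Rightarrow> real mat \<Rightarrow> real mat" where
  "obs_gramian n A C = mat n n (\<lambda>(i,j). \<Sum>k. obs_term A C k $$ (i,j))"

lemma obs_term_carrier: "A \<in> carrier_mat n n \<Longrightarrow> C \<in> carrier_mat d n \<Longrightarrow> obs_term A C k \<in> carrier_mat n n"
  unfolding obs_term_def by auto

lemma obs_term_summable:
  fixes A C :: "real mat"
  assumes A: "A \<in> carrier_mat n n" and C: "C \<in> carrier_mat d n" and st: "stable_mat A" and n: "0 < n"
    and ij: "i < n" "j < n"
  shows "summable (\<lambda>k. obs_term A C k $$ (i,j))"
proof -
  obtain c r where r: "0 < r" "r < 1" and cr: "\<And>k i j. i < n \<Longrightarrow> j < n \<Longrightarrow> \<bar>(A ^\<^sub>m k) $$ (i,j)\<bar> \<le> c * r ^ k"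
    using stable_mat_pow_decay[OF A st n] by blast
  obtain b where b: "norm_bound C b" using norm_bound_max by blast
  define K where "K = b * c * real n"
  have nb: "norm_bound (obs_term A C k) (K * K * real d * (r^2)^k)" for k
  proof -
    have "norm_bound (A ^\<^sub>m k) (c * r ^ k)"
    proof (rule norm_boundI)
      fix i j assume "i < dim_row (A ^\<^sub>m k)" "j < dim_col (A ^\<^sub>m k)"
      hence "i < n" "j < n" using pow_carrier_mat[OF A, of k] by auto
      from cr[OF this, of k] show "norm ((A ^\<^sub>m k) $$ (i,j)) \<le> c * r ^ k" by simp
    qed
    from norm_bound_mult[OF C pow_carrier_mat[OF A] b this]
    have 1: "norm_bound (C * A ^\<^sub>m k) (K * r ^ k)" unfolding K_def by (simp add: ac_simps)
    have 2: "norm_bound (transpose_mat (C * A ^\<^sub>m k)) (K * r ^ k)" by (rule norm_bound_transpose[OF 1])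
    have 3: "norm_bound (transpose_mat (C * A ^\<^sub>m k) * (C * A ^\<^sub>m k)) (K * r ^ k * (K * r ^ k) * real d)"
      by (rule norm_bound_mult[OF _ _ 2 1], insert A C, auto)
    show ?thesis using 3 using A C unfolding obs_term_def by (auto simp: power_mult_distrib power2_eq_square ac_simps power_mult[symmetric])
  qed
  show ?thesis
  proof (rule summable_comparison_test)
    show "\<exists>N. \<forall>k\<ge>N. norm (obs_term A C k $$ (i,j)) \<le> K * K * real d * (r^2)^k"
      using nb ij obs_term_carrier[OF A C] unfolding norm_bound_def by (metis carrier_matD)
    show "summable (\<lambda>k. K * K * real d * (r^2)^k)"
      using r by (intro summable_mult summable_geometric, auto simp: abs_less_iff power2_eq_square)
      (smt (verit) mult_less_cancel_left_pos mult_less_cancel_right1)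
  qed
qed

lemma obs_gramian_carrier: "obs_gramian n A C \<in> carrier_mat n n" unfolding obs_gramian_def by auto

lemma obs_term_Suc:
  assumes A: "A \<in> carrier_mat n n" and C: "C \<in> carrier_mat d n"
  shows "obs_term A C (Suc k) = transpose_mat A * obs_term A C k * A"
proof -
  define Y where "Y = C * A ^\<^sub>m k"
  have Y: "Y \<in> carrier_mat d n" using A C unfolding Y_def by auto
  have "C * A ^\<^sub>m Suc k = Y * A" unfolding Y_def using A C by (simp add: assoc_mult_mat[OF C pow_carrier_mat[OF A] A])
  hence "obs_term A C (Suc k) = transpose_mat (Y * A) * (Y * A)" unfolding obs_term_def by simp
  also have "\<dots> = (transpose_mat A * transpose_mat Y) * (Y * A)" using transpose_mult[OF Y A] by simp
  also have "\<dots> = transpose_mat A * (transpose_mat Y * (Y * A))"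
    by (rule assoc_mult_mat, insert A Y, auto)
  also have "transpose_mat Y * (Y * A) = (transpose_mat Y * Y) * A"
    by (rule assoc_mult_mat[symmetric], insert A Y, auto)
  also have "transpose_mat A * ((transpose_mat Y * Y) * A) = transpose_mat A * (transpose_mat Y * Y) * A"
    by (rule assoc_mult_mat[symmetric], insert A Y, auto)
  finally show ?thesis unfolding obs_term_def Y_def by simp
qed

lemma obs_gramian_stein:
  fixes A C :: "real mat"
  assumes A: "A \<in> carrier_mat n n" and C: "C \<in> carrier_mat d n" and st: "stable_mat A" and n: "0 < n"
  shows "transpose_mat A * obs_gramian n A C * A + transpose_mat C * C = obs_gramian n A C"
proof (rule eq_matI)
  let ?G = "obs_gramian n A C"
  let ?S = "obs_term A C"
  have sm: "\<And>i j. i < n \<Longrightarrow> j < n \<Longrightarrow> summable (\<lambda>k. ?S k $$ (i,j))"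
    using obs_term_summable[OF A C st n] by auto
  fix i j assume i: "i < dim_row ?G" and j: "j < dim_col ?G"
  hence ij: "i < n" "j < n" unfolding obs_gramian_def by auto
  have "(transpose_mat A * ?G * A) $$ (i,j) =
     (\<Sum>a<n. \<Sum>b<n. (transpose_mat A $$ (i,a) * A $$ (b,j)) * (\<Sum>k. ?S k $$ (a,b)))"
    by (subst index_mult_mat_triple[OF _ obs_gramian_carrier A ij], insert A, auto simp: obs_gramian_def intro!: sum.cong)
  also have "\<dots> = (\<Sum>k. \<Sum>a<n. \<Sum>b<n. (transpose_mat A $$ (i,a) * A $$ (b,j)) * ?S k $$ (a,b))"
    by (rule suminf_double_sum_swap(1), rule sm)
  also have "\<dots> = (\<Sum>k. (transpose_mat A * ?S k * A) $$ (i,j))"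
    by (subst index_mult_mat_triple[OF _ obs_term_carrier[OF A C] A ij], insert A, auto)
  also have "\<dots> = (\<Sum>k. ?S (Suc k) $$ (i,j))" using obs_term_Suc[OF A C] by simp
  also have "\<dots> = (\<Sum>k. ?S k $$ (i,j)) - ?S 0 $$ (i,j)"
    by (rule suminf_split_head, rule sm[OF ij])
  also have "?S 0 = transpose_mat C * C" unfolding obs_term_def using A C by simp
  finally show "(transpose_mat A * ?G * A + transpose_mat C * C) $$ (i,j) = ?G $$ (i,j)"
    using ij A C by (simp add: obs_gramian_def)
qed (insert A C, auto simp: obs_gramian_def)

lemma obs_gramian_sym:
  assumes A: "A \<in> carrier_mat n n" and C: "C \<in> carrier_mat d n"
  shows "transpose_mat (obs_gramian n A C) = obs_gramian n A C"
proof -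
  have "obs_term A C k $$ (i,j) = obs_term A C k $$ (j,i)" if "i < n" "j < n" for k i j
    using that A C unfolding obs_term_def by (auto simp: comm_scalar_prod[of _ d])
  thus ?thesis by (auto intro!: eq_matI simp: obs_gramian_def)
qed

lemma obs_gramian_pos:
  fixes A C :: "real mat"
  assumes A: "A \<in> carrier_mat n n" and C: "C \<in> carrier_mat d n" and st: "stable_mat A"
    and obs: "observable n A C"
    and x: "x \<in> carrier_vec n" "x \<noteq> 0\<^sub>v n"
  shows "x \<bullet> (obs_gramian n A C *\<^sub>v x) > 0"
proof -
  let ?S = "obs_term A C"
  have n: "0 < n" using x by (cases n, auto)
  have sm: "\<And>i j. i < n \<Longrightarrow> j < n \<Longrightarrow> summable (\<lambda>k. ?S k $$ (i,j))"
    using obs_term_summable[OF A C st n] by auto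
  have Sx: "x \<bullet> (?S k *\<^sub>v x) = (C * A ^\<^sub>m k *\<^sub>v x) \<bullet> (C * A ^\<^sub>m k *\<^sub>v x)" for k
  proof -
    have Y: "C * A ^\<^sub>m k \<in> carrier_mat d n" using A C by auto
    have "?S k *\<^sub>v x = transpose_mat (C * A ^\<^sub>m k) *\<^sub>v (C * A ^\<^sub>m k *\<^sub>v x)"
      unfolding obs_term_def using Y x by (simp add: assoc_mult_mat_vec[of _ n d _ n])
    hence "x \<bullet> (?S k *\<^sub>v x) = (transpose_mat (C * A ^\<^sub>m k) *\<^sub>v (C * A ^\<^sub>m k *\<^sub>v x)) \<bullet> x"
      using Y x by (simp add: comm_scalar_prod[of _ n])
    also have "\<dots> = (C * A ^\<^sub>m k *\<^sub>v x) \<bullet> (C * A ^\<^sub>m k *\<^sub>v x)"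
      by (rule transpose_vec_mult_scalar[OF Y x(1)], insert Y x, auto)
    finally show ?thesis .
  qed
  have "x \<bullet> (obs_gramian n A C *\<^sub>v x) = (\<Sum>a<n. \<Sum>b<n. (x $ a * x $ b) * (\<Sum>k. ?S k $$ (a,b)))"
    by (subst scalar_prod_mult_mat_vec_double_sum[OF obs_gramian_carrier x(1) x(1)], auto simp: obs_gramian_def intro!: sum.cong)
  also have "\<dots> = (\<Sum>k. \<Sum>a<n. \<Sum>b<n. (x $ a * x $ b) * ?S k $$ (a,b))"
    by (rule suminf_double_sum_swap(1), rule sm)
  also have "\<dots> = (\<Sum>k. x \<bullet> (?S k *\<^sub>v x))"
    by (subst scalar_prod_mult_mat_vec_double_sum[OF obs_term_carrier[OF A C] x(1) x(1)], simp)
  finally have eq: "x \<bullet> (obs_gramian n A C *\<^sub>v x) = (\<Sum>k. x \<bullet> (?S k *\<^sub>v x))" .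
  have summ: "summable (\<lambda>k. x \<bullet> (?S k *\<^sub>v x))"
    using suminf_double_sum_swap(2)[of n n "\<lambda>k a b. ?S k $$ (a,b)" "\<lambda>a b. x $ a * x $ b", OF sm]
    by (subst scalar_prod_mult_mat_vec_double_sum[OF obs_term_carrier[OF A C] x(1) x(1)], simp)
  from obs x obtain k where k: "k < n" "C * A ^\<^sub>m k *\<^sub>v x \<noteq> 0\<^sub>v d"
    unfolding observable_def using C by auto
  have "0 < (C * A ^\<^sub>m k *\<^sub>v x) \<bullet> (C * A ^\<^sub>m k *\<^sub>v x)"
  proof -
    have cv: "C * A ^\<^sub>m k *\<^sub>v x \<in> carrier_vec d"
      by (rule mult_mat_vec_carrier[OF mult_carrier_mat[OF C pow_carrier_mat[OF A]] x(1)])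
    show ?thesis using scalar_prod_self_pos[OF cv k(2)] .
  qed
  also have "\<dots> = sum (\<lambda>k. x \<bullet> (?S k *\<^sub>v x)) {k}" using Sx by simp
  also have "\<dots> \<le> (\<Sum>k. x \<bullet> (?S k *\<^sub>v x))"
    by (rule sum_le_suminf[OF summ], auto simp: Sx scalar_prod_self_nonneg)
  finally show ?thesis using eq by simp
qed

lemma output_normal_congruence:
  fixes A C P T :: "real mat"
  assumes A: "A \<in> carrier_mat n n" and C: "C \<in> carrier_mat d n" and P: "P \<in> carrier_mat n n"
    and Psym: "transpose_mat P = P"
    and stein: "transpose_mat A * P * A + transpose_mat C * C = P"
    and T: "T \<in> carrier_mat n n" and TPT: "transpose_mat T * P * T = 1\<^sub>m n"
  shows "similar_pair n A C (transpose_mat T * P * A * T) (C * T) \<and>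
         output_normal n (transpose_mat T * P * A * T) (C * T)"
proof -
  have Ti: "transpose_mat T * P \<in> carrier_mat n n" using T P by auto
  have TTi: "T * (transpose_mat T * P) = 1\<^sub>m n"
    by (rule mat_mult_left_right_inverse[OF Ti T TPT])
  have sim: "similar_pair n A C (transpose_mat T * P * A * T) (C * T)"
    unfolding similar_pair_def
    by (rule exI[of _ T], rule exI[of _ "transpose_mat T * P"], insert T Ti TPT TTi, auto)
  have TTiX: "T * (transpose_mat T * (P * X)) = X" if X: "X \<in> carrier_mat n n" for X
  proof -
    have "T * (transpose_mat T * (P * X)) = (T * (transpose_mat T * P)) * X"
      using T P X by (simp add: assoc_mult_mat[of _ n n _ n _ n])
    thus ?thesis using TTi X by simp
  qed
  have AC: "transpose_mat A * P * A = P - transpose_mat C * C"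
  proof (rule eq_matI)
    fix i j assume ij: "i < dim_row (P - transpose_mat C * C)" "j < dim_col (P - transpose_mat C * C)"
    hence ij': "i < n" "j < n" using P C by auto
    have "(transpose_mat A * P * A + transpose_mat C * C) $$ (i,j) = P $$ (i,j)" using stein by simp
    thus "(transpose_mat A * P * A) $$ (i,j) = (P - transpose_mat C * C) $$ (i,j)" using ij' A P C by simp
  qed (insert A P C, auto)
  have steinX: "transpose_mat A * (P * (A * X)) = P * X - transpose_mat C * (C * X)" if X: "X \<in> carrier_mat n n" for X
  proof -
    have "transpose_mat A * (P * (A * X)) = (transpose_mat A * P * A) * X"
      using A P X by (simp add: assoc_mult_mat[of _ n n _ n _ n])
    also have "\<dots> = (P - transpose_mat C * C) * X" using AC by simp
    also have "\<dots> = P * X - transpose_mat C * C * X"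
      by (rule minus_mult_distrib_mat, insert P C X, auto)
    also have "transpose_mat C * C * X = transpose_mat C * (C * X)" using C X by (simp add: assoc_mult_mat[of _ n d _ n _ n])
    finally show ?thesis .
  qed
  define A' where "A' = transpose_mat T * P * A * T"
  have tA': "transpose_mat A' = transpose_mat T * (transpose_mat A * (P * T))"
    unfolding A'_def using A P T Psym
    by (simp add: transpose_mult[of _ n n _ n] assoc_mult_mat[of _ n n _ n _ n])
  have "transpose_mat A' * A' = transpose_mat T * (transpose_mat A * (P * (T * (transpose_mat T * (P * (A * T))))))"
    unfolding tA' unfolding A'_def using A P T by (simp add: assoc_mult_mat[of _ n n _ n _ n])
  also have "T * (transpose_mat T * (P * (A * T))) = A * T" using TTiX A T by simp
  also have "transpose_mat A * (P * (A * T)) = P * T - transpose_mat C * (C * T)" using steinX A T by simp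
  also have "transpose_mat T * (P * T - transpose_mat C * (C * T)) =
      transpose_mat T * (P * T) - transpose_mat T * (transpose_mat C * (C * T))"
    by (rule mult_minus_distrib_mat, insert P T C, auto)
  also have "transpose_mat T * (P * T) = 1\<^sub>m n" using TPT T P by (simp add: assoc_mult_mat[of _ n n _ n _ n])
  also have "transpose_mat T * (transpose_mat C * (C * T)) = transpose_mat (C * T) * (C * T)"
    using C T by (simp add: transpose_mult[OF C T] assoc_mult_mat[of _ n n _ d _ n])
  finally have "output_normal n A' (C * T)" unfolding output_normal_def .
  thus ?thesis using sim unfolding A'_def by auto
qed

section \<open>Inner products given by a positive definite matrix\<close>

locale pos_def_form =
  fixes n :: nat and P :: "real mat"
  assumes P: "P \<in> carrier_mat n n" and Psym: "transpose_mat P = P"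
    and Ppos: "\<And>x. x \<in> carrier_vec n \<Longrightarrow> x \<noteq> 0\<^sub>v n \<Longrightarrow> x \<bullet> (P *\<^sub>v x) > 0"
begin

definition ip :: "real vec \<Rightarrow> real vec \<Rightarrow> real" where
  "ip x y = x \<bullet> (P *\<^sub>v y)"

lemma ip_sym: "x \<in> carrier_vec n \<Longrightarrow> y \<in> carrier_vec n \<Longrightarrow> ip x y = ip y x"
  unfolding ip_def
  using transpose_vec_mult_scalar[OF P, of y x] Psym P
  by (metis comm_scalar_prod mult_mat_vec_carrier)

lemma ip_minus_left: "x \<in> carrier_vec n \<Longrightarrow> y \<in> carrier_vec n \<Longrightarrow> z \<in> carrier_vec n \<Longrightarrow>
   ip (x - y) z = ip x z - ip y z"
  unfolding ip_def using P by (simp add: minus_scalar_prod_distrib[of _ n])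

lemma ip_smult_left: "x \<in> carrier_vec n \<Longrightarrow> z \<in> carrier_vec n \<Longrightarrow> ip (c \<cdot>\<^sub>v x) z = c * ip x z"
  unfolding ip_def using P by (simp add: smult_scalar_prod_distrib[of _ n])

lemma ip_minus_right: "x \<in> carrier_vec n \<Longrightarrow> y \<in> carrier_vec n \<Longrightarrow> z \<in> carrier_vec n \<Longrightarrow>
   ip z (x - y) = ip z x - ip z y"
  using ip_minus_left ip_sym by (metis minus_carrier_vec)

lemma ip_smult_right: "x \<in> carrier_vec n \<Longrightarrow> z \<in> carrier_vec n \<Longrightarrow> ip z (c \<cdot>\<^sub>v x) = c * ip z x"
  using ip_smult_left ip_sym by (metis smult_carrier_vec)

lemma ip_pos: "x \<in> carrier_vec n \<Longrightarrow> x \<noteq> 0\<^sub>v n \<Longrightarrow> ip x x > 0"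
  unfolding ip_def by (rule Ppos)

lemma ip_zero_left: "x \<in> carrier_vec n \<Longrightarrow> ip (0\<^sub>v n) x = 0"
  unfolding ip_def using P by (auto simp: scalar_prod_def)

lemma ip_transpose: "x \<in> carrier_vec n \<Longrightarrow> y \<in> carrier_vec n \<Longrightarrow> ip x y = (P *\<^sub>v x) \<bullet> y"
  unfolding ip_def using transpose_vec_mult_scalar[OF P, of y x] Psym by simp

definition orthonormal :: "real vec list \<Rightarrow> bool" where
  "orthonormal ts \<longleftrightarrow> distinct ts \<and> set ts \<subseteq> carrier_vec n \<and>
     (\<forall>s\<in>set ts. \<forall>s'\<in>set ts. ip s s' = (if s = s' then 1 else 0))"

lemma orthonormal_nth: "orthonormal ts \<Longrightarrow> i < length ts \<Longrightarrow> j < length ts \<Longrightarrow>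
   ip (ts ! i) (ts ! j) = (if i = j then 1 else 0)"
  unfolding orthonormal_def by (auto simp: nth_eq_iff_index_eq)

lemma orthonormal_snoc: "orthonormal (ts @ [t]) \<longleftrightarrow> orthonormal ts \<and> t \<in> carrier_vec n \<and> ip t t = 1 \<and> (\<forall>s\<in>set ts. ip s t = 0)"
proof
  assume o: "orthonormal (ts @ [t])"
  hence "t \<notin> set ts" unfolding orthonormal_def by auto
  thus "orthonormal ts \<and> t \<in> carrier_vec n \<and> ip t t = 1 \<and> (\<forall>s\<in>set ts. ip s t = 0)"
    using o unfolding orthonormal_def by (auto split: if_splits)
next
  assume o: "orthonormal ts \<and> t \<in> carrier_vec n \<and> ip t t = 1 \<and> (\<forall>s\<in>set ts. ip s t = 0)"
  hence "t \<notin> set ts" by auto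
  with o show "orthonormal (ts @ [t])" unfolding orthonormal_def
    by (auto simp: ip_sym subsetD)
qed

lemma orthonormal_Cons: "orthonormal (t # ts) \<Longrightarrow> orthonormal ts \<and> t \<in> carrier_vec n \<and> ip t t = 1 \<and> (\<forall>s\<in>set ts. ip s t = 0)"
  unfolding orthonormal_def by (auto split: if_splits)

lemma exists_ip_orthogonal:
  assumes o: "orthonormal ts" and len: "length ts < n"
  shows "\<exists>x \<in> carrier_vec n. x \<noteq> 0\<^sub>v n \<and> (\<forall>s\<in>set ts. ip s x = 0)"
proof -
  define c where "c = (\<lambda>i. if i < length ts then P *\<^sub>v (ts ! i) else 0\<^sub>v n)"
  define M where "M = mat\<^sub>r n n (\<lambda>i. if i = n - 1 then 0\<^sub>v n else c i)"
  have cc: "c \<in> {0..<n} \<rightarrow> carrier_vec n"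
  proof
    fix i assume "i \<in> {0..<n}"
    show "c i \<in> carrier_vec n"
    proof (cases "i < length ts")
      case True
      hence "ts ! i \<in> carrier_vec n" using o unfolding orthonormal_def by (auto dest: nth_mem)
      thus ?thesis using True P unfolding c_def by auto
    qed (auto simp: c_def)
  qed
  have M: "M \<in> carrier_mat n n" unfolding M_def by auto
  have "det M = 0" unfolding M_def by (rule det_row_0[OF _ cc], insert len, auto)
  from this[unfolded det_0_iff_vec_prod_zero[OF M]] obtain v where v: "v \<in> carrier_vec n" "v \<noteq> 0\<^sub>v n" "M *\<^sub>v v = 0\<^sub>v n"
    by auto
  have "ip s v = 0" if s: "s \<in> set ts" for s
  proof -
    from s obtain i where i: "i < length ts" "s = ts ! i" by (auto simp: in_set_conv_nth)
    have "i < n" "i \<noteq> n - 1" using i len by auto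
    have "(M *\<^sub>v v) $ i = 0" using v \<open>i < n\<close> by simp
    moreover have "c i \<in> carrier_vec n" using cc \<open>i < n\<close> by (simp add: Pi_iff)
    hence "dim_vec (c i) = n" by simp
    ultimately have "c i \<bullet> v = 0" using \<open>i < n\<close> \<open>i \<noteq> n - 1\<close> M unfolding M_def by simp
    hence "(P *\<^sub>v s) \<bullet> v = 0" unfolding c_def using i by simp
    thus ?thesis using ip_transpose[of s v] s o v unfolding orthonormal_def by auto
  qed
  thus ?thesis using v by auto
qed

lemma ip_represents_functional:
  assumes w: "w \<in> carrier_vec n"
  shows "\<exists>r\<in>carrier_vec n. \<forall>x\<in>carrier_vec n. ip r x = w \<bullet> x"
proof -
  have "det P \<noteq> 0"
  proof
    assume "det P = 0"
    from this[unfolded det_0_iff_vec_prod_zero[OF P]] obtain v where v: "v \<in> carrier_vec n" "v \<noteq> 0\<^sub>v n" "P *\<^sub>v v = 0\<^sub>v n"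
      by auto
    from ip_pos[OF v(1,2)] v(1,3) show False unfolding ip_def by simp
  qed
  from det_non_zero_imp_unit[OF P this, of "()"]
  obtain B where B: "B \<in> carrier_mat n n" "P * B = 1\<^sub>m n"
    unfolding Units_def ring_mat_def by auto
  define r where "r = B *\<^sub>v w"
  have r: "r \<in> carrier_vec n" unfolding r_def using B w by auto
  have Pr: "P *\<^sub>v r = w" unfolding r_def using B w P
    by (metis assoc_mult_mat_vec carrier_vecD one_mult_mat_vec)
  show ?thesis
    by (intro bexI[OF _ r] ballI, subst ip_transpose, insert r, auto simp: Pr)
qed

primrec project_out :: "real vec list \<Rightarrow> real vec \<Rightarrow> real vec" where
  "project_out [] r = r"
| "project_out (t # ts) r = project_out ts r - ip t r \<cdot>\<^sub>v t"

lemma project_out_carrier: "set ts \<subseteq> carrier_vec n \<Longrightarrow> r \<in> carrier_vec n \<Longrightarrow> project_out ts r \<in> carrier_vec n"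
  by (induct ts, auto)

lemma ip_project_out_left: "set ts \<subseteq> carrier_vec n \<Longrightarrow> r \<in> carrier_vec n \<Longrightarrow> x \<in> carrier_vec n \<Longrightarrow>
  \<forall>s\<in>set ts. ip s x = 0 \<Longrightarrow> ip (project_out ts r) x = ip r x"
proof (induct ts)
  case (Cons t ts)
  have c: "project_out ts r \<in> carrier_vec n" "t \<in> carrier_vec n" using Cons project_out_carrier by auto
  have "ip (project_out (t # ts) r) x = ip (project_out ts r) x - ip t r * ip t x"
    using c Cons by (simp add: ip_minus_left ip_smult_left)
  thus ?case using Cons by auto
qed simp

lemma project_out_orthogonal: "orthonormal ts \<Longrightarrow> r \<in> carrier_vec n \<Longrightarrow> \<forall>s\<in>set ts. ip s (project_out ts r) = 0"
proof (induct ts)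
  case (Cons t ts)
  from orthonormal_Cons[OF Cons(2)] have o: "orthonormal ts" "t \<in> carrier_vec n" "ip t t = 1" "\<forall>s\<in>set ts. ip s t = 0"
    by auto
  have tsc: "set ts \<subseteq> carrier_vec n" using o unfolding orthonormal_def by auto
  have c: "project_out ts r \<in> carrier_vec n" using project_out_carrier[OF tsc Cons(3)] .
  have IH: "\<forall>s\<in>set ts. ip s (project_out ts r) = 0" using Cons o by auto
  show ?case
  proof
    fix s assume s: "s \<in> set (t # ts)"
    have sc: "s \<in> carrier_vec n" using s o tsc by auto
    have eq: "ip s (project_out (t # ts) r) = ip s (project_out ts r) - ip t r * ip s t"
      using c o sc by (simp add: ip_minus_right ip_smult_right)
    show "ip s (project_out (t # ts) r) = 0"
    proof (cases "s = t")
      case True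
      have "ip t (project_out ts r) = ip (project_out ts r) t" using ip_sym c o by auto
      also have "\<dots> = ip r t" by (rule ip_project_out_left[OF tsc Cons(3) o(2) o(4)])
      also have "\<dots> = ip t r" using ip_sym o Cons(3) by auto
      finally show ?thesis using eq True o by simp
    next
      case False
      hence "s \<in> set ts" using s by auto
      thus ?thesis using eq IH o by auto
    qed
  qed
qed simp

text \<open>The new vector is the normalised projection of the Riesz representer of \<open>w\<close> onto the
  complement of \<open>ts\<close> (or any unit vector there if that projection vanishes).\<close>
lemma orthonormal_extend_step:
  assumes o: "orthonormal ts" and len: "length ts < n" and w: "w \<in> carrier_vec n"
  shows "\<exists>t. orthonormal (ts @ [t]) \<and> (\<forall>x\<in>carrier_vec n. (\<forall>s\<in>set (ts @ [t]). ip s x = 0) \<longrightarrow> w \<bullet> x = 0)"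
proof -
  have tsc: "set ts \<subseteq> carrier_vec n" using o unfolding orthonormal_def by auto
  obtain r where r: "r \<in> carrier_vec n" and rw: "\<And>x. x \<in> carrier_vec n \<Longrightarrow> ip r x = w \<bullet> x"
    using ip_represents_functional[OF w] by auto
  define r' where "r' = project_out ts r"
  have r': "r' \<in> carrier_vec n" unfolding r'_def by (rule project_out_carrier[OF tsc r])
  have r'o: "\<forall>s\<in>set ts. ip s r' = 0" unfolding r'_def by (rule project_out_orthogonal[OF o r])
  have r'x: "\<And>x. x \<in> carrier_vec n \<Longrightarrow> \<forall>s\<in>set ts. ip s x = 0 \<Longrightarrow> ip r' x = w \<bullet> x"
    unfolding r'_def using ip_project_out_left[OF tsc r] rw by auto
  have norm: "\<exists>t. orthonormal (ts @ [t]) \<and> (\<exists>c. t = c \<cdot>\<^sub>v y \<and> c \<noteq> 0)"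
    if y: "y \<in> carrier_vec n" "y \<noteq> 0\<^sub>v n" "\<forall>s\<in>set ts. ip s y = 0" for y
  proof -
    define c where "c = 1 / sqrt (ip y y)"
    have gy: "ip y y > 0" using ip_pos y by auto
    have c0: "c \<noteq> 0" using gy unfolding c_def by auto
    define t where "t = c \<cdot>\<^sub>v y"
    have t: "t \<in> carrier_vec n" unfolding t_def using y by auto
    have "ip t t = c * c * ip y y" unfolding t_def using y by (simp add: ip_smult_left ip_smult_right)
    also have "\<dots> = 1" unfolding c_def using gy
      by (simp add: field_simps)
    finally have tt: "ip t t = 1" .
    have "\<forall>s\<in>set ts. ip s t = 0" unfolding t_def using y tsc by (auto simp: ip_smult_right)
    hence "orthonormal (ts @ [t])" using orthonormal_snoc o t tt by auto
    thus ?thesis using c0 unfolding t_def by auto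
  qed
  show ?thesis
  proof (cases "r' = 0\<^sub>v n")
    case True
    obtain y where y: "y \<in> carrier_vec n" "y \<noteq> 0\<^sub>v n" "\<forall>s\<in>set ts. ip s y = 0"
      using exists_ip_orthogonal[OF o len] by auto
    obtain t where t: "orthonormal (ts @ [t])" using norm[OF y] by auto
    have "w \<bullet> x = 0" if x: "x \<in> carrier_vec n" "\<forall>s\<in>set (ts @ [t]). ip s x = 0" for x
      using r'x[OF x(1)] x True ip_zero_left by auto
    thus ?thesis using t by auto
  next
    case False
    obtain t c where t: "orthonormal (ts @ [t])" "t = c \<cdot>\<^sub>v r'" "c \<noteq> 0" using norm[OF r' False r'o] by auto
    have "w \<bullet> x = 0" if x: "x \<in> carrier_vec n" "\<forall>s\<in>set (ts @ [t]). ip s x = 0" for x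
    proof -
      have "ip t x = 0" using x by auto
      hence "c * ip r' x = 0" using t r' x by (simp add: ip_smult_left)
      hence "ip r' x = 0" using t by auto
      thus ?thesis using r'x x by auto
    qed
    thus ?thesis using t by auto
  qed
qed

text \<open>Gram--Schmidt with side constraints: the vector chosen at step \<open>a\<close> forces all later basis
  vectors to be Euclidean-orthogonal to \<open>Phi\<close> of the first \<open>a\<close> basis vectors.\<close>
lemma orthonormal_extend_constrained:
  assumes o: "orthonormal ts0" and len: "length ts0 \<le> n"
    and Phi: "\<And>ts. Phi ts \<in> carrier_vec n"
  shows "\<exists>ts. orthonormal ts \<and> length ts = n \<and> take (length ts0) ts = ts0 \<and>
     (\<forall>a b. length ts0 \<le> a \<longrightarrow> a < b \<longrightarrow> b < n \<longrightarrow> Phi (take a ts) \<bullet> (ts ! b) = 0)"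
proof -
  let ?Q = "\<lambda>k ts. orthonormal ts \<and> length ts = k \<and> take (length ts0) ts = ts0 \<and>
     (\<forall>a<k. length ts0 \<le> a \<longrightarrow> (\<forall>x\<in>carrier_vec n. (\<forall>b\<le>a. ip (ts ! b) x = 0) \<longrightarrow> Phi (take a ts) \<bullet> x = 0))"
  have "\<exists>ts. ?Q (length ts0 + dd) ts" if "length ts0 + dd \<le> n" for dd
    using that
  proof (induct dd)
    case 0
    show ?case by (rule exI[of _ ts0], insert o, auto)
  next
    case (Suc dd)
    define k where "k = length ts0 + dd"
    have step: "length ts0 \<le> k" "k < n" using Suc(2) unfolding k_def by auto
    from Suc obtain ts where Q: "?Q k ts" unfolding k_def by auto
    from orthonormal_extend_step[OF conjunct1[OF Q] _ Phi[of ts]] Q step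
    obtain t where t: "orthonormal (ts @ [t])"
      and tx: "\<And>x. x \<in> carrier_vec n \<Longrightarrow> (\<forall>s\<in>set (ts @ [t]). ip s x = 0) \<Longrightarrow> Phi ts \<bullet> x = 0" by auto
    have "?Q (Suc k) (ts @ [t])"
    proof (intro conjI allI impI ballI)
      show "orthonormal (ts @ [t])" by fact
      show "length (ts @ [t]) = Suc k" using Q by simp
      show "take (length ts0) (ts @ [t]) = ts0" using Q step(1) by simp
      fix a x
      assume a: "a < Suc k" "length ts0 \<le> a" and x: "x \<in> carrier_vec n" and
        xo: "\<forall>b\<le>a. ip ((ts @ [t]) ! b) x = 0"
      show "Phi (take a (ts @ [t])) \<bullet> x = 0"
      proof (cases "a < k")
        case True
        have "take a (ts @ [t]) = take a ts" using True Q by simp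
        moreover have "\<forall>b\<le>a. ip (ts ! b) x = 0" using xo True Q by (auto simp: nth_append)
        ultimately show ?thesis using Q True a x by auto
      next
        case False
        hence ak: "a = k" using a by auto
        have "take a (ts @ [t]) = ts" using ak Q by simp
        moreover have "\<forall>s\<in>set (ts @ [t]). ip s x = 0"
        proof
          fix s assume "s \<in> set (ts @ [t])"
          then obtain b where b: "b < length (ts @ [t])" "s = (ts @ [t]) ! b" by (metis in_set_conv_nth)
          thus "ip s x = 0" using xo ak Q by auto
        qed
        ultimately show ?thesis using tx x by auto
      qed
    qed
    thus ?case unfolding k_def by auto
  qed
  from this[of "n - length ts0"] len have "\<exists>ts. ?Q n ts" by simp
  then obtain ts where Q: "?Q n ts" by blast
  have "Phi (take a ts) \<bullet> (ts ! b) = 0" if ab: "length ts0 \<le> a" "a < b" "b < n" for a b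
  proof -
    have tb: "ts ! b \<in> carrier_vec n" using Q ab unfolding orthonormal_def by (auto dest: nth_mem)
    have "\<forall>c\<le>a. ip (ts ! c) (ts ! b) = 0" using orthonormal_nth[of ts] Q ab by auto
    thus ?thesis using Q ab tb by auto
  qed
  thus ?thesis using Q by blast
qed

lemma orthonormal_basis_mat:
  assumes o: "orthonormal ts" and len: "length ts = n"
  defines "T \<equiv> mat_of_cols n ts"
  shows "T \<in> carrier_mat n n"
    and "transpose_mat T * P * T = 1\<^sub>m n"
    and "\<And>(X :: real mat) i j. X \<in> carrier_mat n n \<Longrightarrow> i < n \<Longrightarrow> j < n \<Longrightarrow>
          (transpose_mat T * P * X * T) $$ (i,j) = ip (ts ! i) (X *\<^sub>v (ts ! j))"
    and "\<And>(D :: real mat) i j. D \<in> carrier_mat dd n \<Longrightarrow> i < dd \<Longrightarrow> j < n \<Longrightarrow>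
          (D * T) $$ (i,j) = (D *\<^sub>v (ts ! j)) $ i"
proof -
  show T: "T \<in> carrier_mat n n" unfolding T_def using len by auto
  have tc: "\<And>j. j < n \<Longrightarrow> ts ! j \<in> carrier_vec n" using o len unfolding orthonormal_def by (auto dest: nth_mem)
  have colT: "\<And>j. j < n \<Longrightarrow> col T j = ts ! j" unfolding T_def using len tc by simp
  show "transpose_mat T * P * T = 1\<^sub>m n"
  proof (rule eq_matI)
    fix i j assume ij: "i < dim_row (1\<^sub>m n)" "j < dim_col (1\<^sub>m n)"
    hence "i < n" "j < n" by auto
    thus "(transpose_mat T * P * T) $$ (i,j) = 1\<^sub>m n $$ (i,j)"
      using index_congruence_mat[OF T P] colT orthonormal_nth[OF o] len unfolding ip_def by auto
  qed (insert T P, auto)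
  fix X :: "real mat" and i j assume X: "X \<in> carrier_mat n n" and ij: "i < n" "j < n"
  have "transpose_mat T * P * X * T = transpose_mat T * (P * X) * T" using T P X by (simp add: assoc_mult_mat[of _ n n _ n _ n])
  also have "\<dots> $$ (i,j) = col T i \<bullet> ((P * X) *\<^sub>v col T j)"
    by (rule index_congruence_mat[OF T _ ij], insert P X, auto)
  also have "\<dots> = ip (ts ! i) (X *\<^sub>v (ts ! j))"
    unfolding ip_def using colT ij P X tc by simp
  finally show "(transpose_mat T * P * X * T) $$ (i,j) = ip (ts ! i) (X *\<^sub>v (ts ! j))" .
next
  fix D :: "real mat" and i j assume D: "D \<in> carrier_mat dd n" and ij: "i < dd" "j < n"
  have tc: "ts ! j \<in> carrier_vec n" using o len ij unfolding orthonormal_def by (auto dest: nth_mem)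
  show "(D * T) $$ (i,j) = (D *\<^sub>v (ts ! j)) $ i"
    unfolding T_def using D ij len tc by simp
qed

end

section \<open>Output normal OTS and HO forms\<close>

lemma pos_def_form_obs_gramian:
  fixes A C :: "real mat"
  assumes A: "A \<in> carrier_mat n n" and C: "C \<in> carrier_mat d n" and st: "stable_mat A"
    and obs: "observable n A C"
  shows "pos_def_form n (obs_gramian n A C)"
  by (unfold_locales, rule obs_gramian_carrier, rule obs_gramian_sym[OF A C], rule obs_gramian_pos[OF A C st obs])

lemma obs_gramian_basis_transform:
  fixes A C :: "real mat"
  assumes A: "A \<in> carrier_mat n n" and C: "C \<in> carrier_mat d n" and st: "stable_mat A"
    and obs: "observable n A C" and n: "0 < n"
    and o: "pos_def_form.orthonormal n (obs_gramian n A C) ts" and len: "length ts = n"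
  defines "T \<equiv> mat_of_cols n ts"
  defines "A' \<equiv> transpose_mat T * obs_gramian n A C * A * T"
  defines "C' \<equiv> C * T"
  shows "A' \<in> carrier_mat n n" "C' \<in> carrier_mat d n" "similar_pair n A C A' C'" "output_normal n A' C'"
    "\<And>i j. i < n \<Longrightarrow> j < n \<Longrightarrow> A' $$ (i,j) = pos_def_form.ip (obs_gramian n A C) (ts ! i) (A *\<^sub>v (ts ! j))"
    "\<And>i j. i < d \<Longrightarrow> j < n \<Longrightarrow> C' $$ (i,j) = (C *\<^sub>v (ts ! j)) $ i"
proof -
  interpret gram: pos_def_form n "obs_gramian n A C" by (rule pos_def_form_obs_gramian[OF A C st obs])
  note om = gram.orthonormal_basis_mat[OF o len, folded T_def]
  show "A' \<in> carrier_mat n n" "C' \<in> carrier_mat d n" unfolding A'_def C'_def using om(1) A C obs_gramian_carrier[of n A C] by auto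
  from output_normal_congruence[OF A C obs_gramian_carrier obs_gramian_sym[OF A C] obs_gramian_stein[OF A C st n] om(1,2)]
  show "similar_pair n A C A' C'" "output_normal n A' C'" unfolding A'_def C'_def by auto
  show "\<And>i j. i < n \<Longrightarrow> j < n \<Longrightarrow> A' $$ (i,j) = gram.ip (ts ! i) (A *\<^sub>v (ts ! j))"
    unfolding A'_def using om(3)[OF A] by auto
  show "\<And>i j. i < d \<Longrightarrow> j < n \<Longrightarrow> C' $$ (i,j) = (C *\<^sub>v (ts ! j)) $ i"
    unfolding C'_def using om(4)[OF C] by auto
qed

lemma OTSON_similar_exists:
  fixes A C :: "real mat"
  assumes d: "1 \<le> d" "d \<le> n" and A: "A \<in> carrier_mat n n" and C: "C \<in> carrier_mat d n"
    and st: "stable_mat A" and obs: "observable n A C"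
  shows "\<exists>A1 C1. A1 \<in> carrier_mat n n \<and> C1 \<in> carrier_mat d n \<and>
            similar_pair n A C A1 C1 \<and> OTSON n d A1 C1"
proof -
  have n: "0 < n" using d by auto
  let ?G = "obs_gramian n A C"
  interpret gram: pos_def_form n ?G by (rule pos_def_form_obs_gramian[OF A C st obs])
  txt \<open>Orthogonality of \<open>t\<^sub>j\<close> to \<open>Phi [t\<^sub>0, \<dots>, t\<^sub>i\<^sub>-\<^sub>1]\<close> is the vanishing of entry \<open>(i, j)\<close> of the
    stack \<open>[C; A]\<close> in the new coordinates.\<close>
  define Phi where "Phi = (\<lambda>ts :: real vec list. if length ts < d then row C (length ts)
     else transpose_mat A *\<^sub>v (?G *\<^sub>v (ts ! (length ts - d))))"
  have Phic: "Phi ts \<in> carrier_vec n" for ts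
  proof (rule carrier_vecI)
    show "dim_vec (Phi ts) = n" unfolding Phi_def using A C by (cases "length ts < d", auto)
  qed
  have o0: "gram.orthonormal []" unfolding gram.orthonormal_def by auto
  from gram.orthonormal_extend_constrained[of "[]" Phi, OF o0 _ Phic] obtain ts where o: "gram.orthonormal ts" and len: "length ts = n"
    and cond: "\<And>a b. a < b \<Longrightarrow> b < n \<Longrightarrow> Phi (take a ts) \<bullet> (ts ! b) = 0" by auto
  note ot = obs_gramian_basis_transform[OF A C st obs n o len]
  have tc: "\<And>j. j < n \<Longrightarrow> ts ! j \<in> carrier_vec n" using o len unfolding gram.orthonormal_def by (auto dest: nth_mem)
  define A1 where "A1 = transpose_mat (mat_of_cols n ts) * ?G * A * mat_of_cols n ts"
  define C1 where "C1 = C * mat_of_cols n ts"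
  have "OTS_form n d A1 C1"
    unfolding OTS_form_def
  proof (intro allI impI)
    fix i j assume ij: "i < n + d" "j < n" "i < j"
    have cij: "Phi (take i ts) \<bullet> (ts ! j) = 0" using cond ij by auto
    show "stackQ d A1 C1 i j = 0"
    proof (cases "i < d")
      case True
      have "Phi (take i ts) = row C i" unfolding Phi_def using True ij len by simp
      hence "(C *\<^sub>v (ts ! j)) $ i = 0" using cij True C by simp
      thus ?thesis unfolding stackQ_def C1_def using ot(6)[OF True ij(2)] True by simp
    next
      case False
      have idn: "i - d < n" "i - d < i" using ij d False by auto
      have "Phi (take i ts) = transpose_mat A *\<^sub>v (?G *\<^sub>v (ts ! (i - d)))"
        unfolding Phi_def using False ij len idn by simp
      hence "(transpose_mat A *\<^sub>v (?G *\<^sub>v (ts ! (i - d)))) \<bullet> (ts ! j) = 0" using cij by simp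
      hence "(?G *\<^sub>v (ts ! (i - d))) \<bullet> (A *\<^sub>v (ts ! j)) = 0"
        using transpose_vec_mult_scalar[OF A tc[OF ij(2)], of "?G *\<^sub>v (ts ! (i - d))"]
          mult_mat_vec_carrier[OF obs_gramian_carrier[of n A C] tc[OF idn(1)]]
        by auto
      hence "gram.ip (ts ! (i - d)) (A *\<^sub>v (ts ! j)) = 0"
        using gram.ip_transpose[of "ts ! (i - d)" "A *\<^sub>v (ts ! j)"] tc idn ij A by auto
      thus ?thesis unfolding stackQ_def A1_def using ot(5)[OF idn(1) ij(2)] False by simp
    qed
  qed
  thus ?thesis using ot(1-4) unfolding OTSON_def A1_def C1_def by blast
qed

lemma HOON_similar_exists:
  fixes A C :: "real mat"
  assumes d: "1 \<le> d" "d \<le> n" and A: "A \<in> carrier_mat n n" and C: "C \<in> carrier_mat d n"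
    and st: "stable_mat A" and obs: "observable n A C"
  shows "\<exists>A2 C2. A2 \<in> carrier_mat n n \<and> C2 \<in> carrier_mat d n \<and>
            similar_pair n A C A2 C2 \<and> HOON n A2 C2"
proof -
  have n: "0 < n" using d by auto
  let ?G = "obs_gramian n A C"
  interpret gram: pos_def_form n ?G by (rule pos_def_form_obs_gramian[OF A C st obs])
  txt \<open>Now the constraints kill the entries \<open>C\<^sub>0\<^sub>j\<close> for \<open>j > 0\<close> and \<open>A\<^sub>i\<^sub>j\<close> for \<open>i > j + 1\<close>.\<close>
  define Phi where "Phi = (\<lambda>ts :: real vec list. if ts = [] then row C 0
     else ?G *\<^sub>v (A *\<^sub>v last ts))"
  have Phic: "Phi ts \<in> carrier_vec n" for ts
  proof (rule carrier_vecI)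
    show "dim_vec (Phi ts) = n" unfolding Phi_def using A C obs_gramian_carrier[of n A C] by (cases "ts = []", auto)
  qed
  have o0: "gram.orthonormal []" unfolding gram.orthonormal_def by auto
  from gram.orthonormal_extend_constrained[of "[]" Phi, OF o0 _ Phic] obtain ts where o: "gram.orthonormal ts" and len: "length ts = n"
    and cond: "\<And>a b. a < b \<Longrightarrow> b < n \<Longrightarrow> Phi (take a ts) \<bullet> (ts ! b) = 0" by auto
  note ot = obs_gramian_basis_transform[OF A C st obs n o len]
  have tc: "\<And>j. j < n \<Longrightarrow> ts ! j \<in> carrier_vec n" using o len unfolding gram.orthonormal_def by (auto dest: nth_mem)
  define A2 where "A2 = transpose_mat (mat_of_cols n ts) * ?G * A * mat_of_cols n ts"
  define C2 where "C2 = C * mat_of_cols n ts"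
  have "HO_form n A2 C2"
    unfolding HO_form_def
  proof (intro conjI allI impI)
    fix i j assume ij: "i < n" "j < n" "j + 1 < i"
    have cij: "Phi (take (j + 1) ts) \<bullet> (ts ! i) = 0" using cond ij by auto
    have "Phi (take (j + 1) ts) = ?G *\<^sub>v (A *\<^sub>v (ts ! j))"
      unfolding Phi_def using ij len by (simp add: take_Suc_conv_app_nth)
    hence "(?G *\<^sub>v (A *\<^sub>v (ts ! j))) \<bullet> (ts ! i) = 0" using cij by simp
    hence "gram.ip (ts ! i) (A *\<^sub>v (ts ! j)) = 0" unfolding gram.ip_def
      using comm_scalar_prod[of "ts ! i" n] tc ij A obs_gramian_carrier[of n A C]
      by (metis mult_mat_vec_carrier)
    thus "A2 $$ (i,j) = 0" unfolding A2_def using ot(5)[OF ij(1,2)] by simp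
  next
    fix j :: nat assume j: "0 < j" "j < n"
    have cij: "Phi (take 0 ts) \<bullet> (ts ! j) = 0" using cond[of 0 j] j by simp
    hence "row C 0 \<bullet> (ts ! j) = 0" unfolding Phi_def by simp
    hence "(C *\<^sub>v (ts ! j)) $ 0 = 0" using C d by simp
    thus "C2 $$ (0,j) = 0" unfolding C2_def using ot(6)[of 0 j] d j by simp
  qed
  thus ?thesis using ot(1-4) unfolding HOON_def A2_def C2_def by blast
qed

section \<open>Two-by-two blocks in qd form\<close>

lemma rotation_angle_exists:
  fixes s00 s01 s11 :: real
  shows "\<exists>p q. p^2 + q^2 = 1 \<and> (s11 - s00) * p * q + s01 * (p^2 - q^2) = 0"
proof -
  define h where "h = (\<lambda>t::real. (s11 - s00) * (1 - t) * t + s01 * ((1 - t)^2 - t^2))"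
  have cont: "continuous_on {0..1} h" unfolding h_def by (intro continuous_intros)
  have "\<exists>t. 0 \<le> t \<and> t \<le> 1 \<and> h t = 0"
  proof (cases "s01 \<ge> 0")
    case True
    show ?thesis by (rule IVT2'[OF _ _ _ cont], insert True, auto simp: h_def)
  next
    case False
    show ?thesis by (rule IVT'[OF _ _ _ cont], insert False, auto simp: h_def)
  qed
  then obtain t where t: "0 \<le> t" "t \<le> 1" "h t = 0" by auto
  define N where "N = sqrt ((1 - t)^2 + t^2)"
  have pos: "(1 - t)^2 + t^2 > 0"
  proof (cases "t = 0")
    case True thus ?thesis by simp
  next
    case False thus ?thesis by (simp add: add_nonneg_pos)
  qed
  hence N: "N > 0" "N^2 = (1 - t)^2 + t^2" unfolding N_def by auto
  define p where "p = (1 - t) / N"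
  define q where "q = t / N"
  have "p^2 + q^2 = ((1 - t)^2 + t^2) / N^2" unfolding p_def q_def by (simp add: power_divide add_divide_distrib)
  also have "\<dots> = 1" using N by simp
  finally have pq: "p^2 + q^2 = 1" .
  have "(s11 - s00) * p * q + s01 * (p^2 - q^2) = h t / N^2"
    unfolding p_def q_def h_def using N by (simp add: field_simps power2_eq_square)
  also have "\<dots> = 0" using t by simp
  finally show ?thesis using pq by blast
qed

lemma rotation_orthogonal_columns:
  fixes z00 z01 z10 z11 :: real
  shows "\<exists>p q. p^2 + q^2 = 1 \<and>
    (z00 * p + z01 * q) * (z01 * p - z00 * q) + (z10 * p + z11 * q) * (z11 * p - z10 * q) = 0 \<and>
    (z01 * p - z00 * q)^2 + (z11 * p - z10 * q)^2 \<le> (z00 * p + z01 * q)^2 + (z10 * p + z11 * q)^2"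
proof -
  obtain p q where pq: "p^2 + q^2 = 1"
    and h: "((z01^2 + z11^2) - (z00^2 + z10^2)) * p * q + (z00 * z01 + z10 * z11) * (p^2 - q^2) = 0"
    using rotation_angle_exists by blast
  have o: "(z00 * p + z01 * q) * (z01 * p - z00 * q) + (z10 * p + z11 * q) * (z11 * p - z10 * q) = 0"
    using h by (simp add: algebra_simps power2_eq_square)
  show ?thesis
  proof (cases "(z01 * p - z00 * q)^2 + (z11 * p - z10 * q)^2 \<le> (z00 * p + z01 * q)^2 + (z10 * p + z11 * q)^2")
    case True thus ?thesis using pq o by blast
  next
    case False
    show ?thesis
      by (rule exI[of _ "-q"], rule exI[of _ p], insert pq o False, auto simp: algebra_simps power2_eq_square)
  qed
qed

lemma qd_factors_from_orthogonal_columns: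
  fixes y00 y01 y10 y11 :: real
  assumes o: "y00 * y01 + y10 * y11 = 0" and le: "y01^2 + y11^2 \<le> y00^2 + y10^2"
    and det: "y00 * y11 - y01 * y10 > 0"
  shows "\<exists>c s d1 d2. c^2 + s^2 = 1 \<and> d1 \<ge> d2 \<and> d2 \<ge> 0 \<and>
     y00 = c * d1 \<and> y10 = - s * d1 \<and> y01 = s * d2 \<and> y11 = c * d2"
proof -
  define d1 where "d1 = sqrt (y00^2 + y10^2)"
  have "y00 \<noteq> 0 \<or> y10 \<noteq> 0" using det by auto
  hence nz: "y00^2 + y10^2 > 0" by (simp add: sum_power2_gt_zero_iff)
  have d1: "d1 > 0" "d1^2 = y00^2 + y10^2" unfolding d1_def using nz by (simp_all add: less_imp_le)
  define c where "c = y00 / d1"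
  define s where "s = - y10 / d1"
  have cs: "c^2 + s^2 = 1" unfolding c_def s_def using d1 nz \<open>y00 \<noteq> 0 \<or> y10 \<noteq> 0\<close> by (simp add: power_divide flip: add_divide_distrib)
  have y00: "y00 = c * d1" and y10: "y10 = - s * d1" unfolding c_def s_def using d1 by auto
  define t where "t = s * y01 + c * y11"
  have rel: "c * y01 = s * y11"
  proof -
    have "d1 * (c * y01 - s * y11) = 0" using o y00 y10 by (simp add: algebra_simps)
    thus ?thesis using d1 by auto
  qed
  have y01: "y01 = s * t"
  proof -
    have "s * t = s^2 * y01 + c * (s * y11)" unfolding t_def by (simp add: algebra_simps power2_eq_square)
    also have "\<dots> = (s^2 + c^2) * y01" using rel by (simp add: algebra_simps power2_eq_square)
    finally show ?thesis using cs by (simp add: add.commute)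
  qed
  have y11: "y11 = c * t"
  proof -
    have "c * t = s * (c * y01) + c^2 * y11" unfolding t_def by (simp add: algebra_simps power2_eq_square)
    also have "\<dots> = (s^2 + c^2) * y11" using rel by (simp add: algebra_simps power2_eq_square)
    finally show ?thesis using cs by (simp add: add.commute)
  qed
  have "y00 * y11 - y01 * y10 = d1 * t * (c^2 + s^2)"
    unfolding y00 y10 y01 y11 by (simp add: algebra_simps power2_eq_square)
  hence "d1 * t > 0" using det cs by simp
  hence tpos: "t > 0" using d1 by (simp add: zero_less_mult_iff)
  have "y01^2 + y11^2 = (s^2 + c^2) * t^2" unfolding y01 y11 by (simp add: power_mult_distrib algebra_simps)
  hence "t^2 = y01^2 + y11^2" using cs by (simp add: add.commute)
  hence "t^2 \<le> d1^2" using le d1 by simp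
  hence "t \<le> d1" using tpos d1 by (meson less_le power2_le_imp_le)
  thus ?thesis using cs tpos y00 y10 y01 y11 by (intro exI[of _ c] exI[of _ s] exI[of _ d1] exI[of _ t], auto)
qed

lemma index_mult_mat2:
  fixes X Y :: "'a :: comm_ring_1 mat"
  assumes "X \<in> carrier_mat 2 2" "Y \<in> carrier_mat 2 2" "i < 2" "j < 2"
  shows "(X * Y) $$ (i,j) = X $$ (i,0) * Y $$ (0,j) + X $$ (i,1) * Y $$ (1,j)"
  using assms by (auto simp: scalar_prod_def numeral_2_eq_2)

definition mat2 :: "'a \<Rightarrow> 'a \<Rightarrow> 'a \<Rightarrow> 'a \<Rightarrow> 'a mat" where
  "mat2 a b c d = mat_of_rows_list 2 [[a,b],[c,d]]"

lemma mat2_carrier[simp]: "mat2 a b c d \<in> carrier_mat 2 2"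
  unfolding mat2_def mat_of_rows_list_def by auto

lemma mat2_index[simp]: "mat2 a b c d $$ (0,0) = a" "mat2 a b c d $$ (0,1) = b"
   "mat2 a b c d $$ (1,0) = c" "mat2 a b c d $$ (1,1) = d"
   "mat2 a b c d $$ (0,Suc 0) = b"
   "mat2 a b c d $$ (Suc 0,0) = c" "mat2 a b c d $$ (Suc 0,Suc 0) = d"
  unfolding mat2_def mat_of_rows_list_def by auto

lemma mat2_eqI:
  assumes "X \<in> carrier_mat 2 2" "Y \<in> carrier_mat 2 2"
    "X $$ (0,0) = Y $$ (0,0)" "X $$ (0,1) = Y $$ (0,1)" "X $$ (1,0) = Y $$ (1,0)" "X $$ (1,1) = Y $$ (1,1)"
  shows "X = Y"
proof (rule eq_matI)
  fix i j assume "i < dim_row Y" "j < dim_col Y"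
  hence "i = 0 \<or> i = 1" "j = 0 \<or> j = 1" using assms by auto
  thus "X $$ (i,j) = Y $$ (i,j)" using assms by auto
qed (insert assms, auto)

lemma mat2_eta: "X \<in> carrier_mat 2 2 \<Longrightarrow> X = mat2 (X $$ (0,0)) (X $$ (0,1)) (X $$ (1,0)) (X $$ (1,1))"
  by (rule mat2_eqI, auto)

lemma mat2_mult: fixes a :: "'a :: comm_ring_1" shows "mat2 a b c d * mat2 e f g h = mat2 (a*e + b*g) (a*f + b*h) (c*e + d*g) (c*f + d*h)"
  by (rule mat2_eqI, insert mult_carrier_mat[OF mat2_carrier mat2_carrier], auto simp: index_mult_mat2[OF mat2_carrier mat2_carrier])

lemma mat2_transpose: "transpose_mat (mat2 a b c d) = mat2 a c b d"
  by (rule mat2_eqI, auto simp: mat2_def mat_of_rows_list_def)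

lemma mat2_one: "1\<^sub>m 2 = mat2 1 0 0 1"
  by (rule mat2_eqI, auto)

lemma qd_block_mat2: "qd_block (mat2 (c * d1) (s * d2) (- s * d1) (c * d2))"
  if "c^2 + s^2 = 1" "s \<ge> 0" "d1 \<ge> d2" "d2 \<ge> 0"
proof -
  have "mat2 (c * d1) (s * d2) (- s * d1) (c * d2) = mat_of_rows_list 2 [[c, s], [-s, c]] * mat_of_rows_list 2 [[d1, 0], [0, d2]]"
    using mat2_mult[of c s "-s" c d1 0 0 d2] unfolding mat2_def by simp
  thus ?thesis unfolding qd_block_def using that by blast
qed

text \<open>Rotate so that \<open>Z G\<close> has orthogonal columns, the first one the longer; multiplying
  on the left by \<open>G\<^sup>T\<close> keeps this property, and a reflection instead of a rotation fixes the sign of \<open>s\<close>.\<close>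
lemma qd_block_orthogonal_similar:
  fixes Z :: "real mat"
  assumes Z: "Z \<in> carrier_mat 2 2" and det: "Z $$ (0,0) * Z $$ (1,1) - Z $$ (0,1) * Z $$ (1,0) > 0"
  shows "\<exists>G. G \<in> carrier_mat 2 2 \<and> transpose_mat G * G = 1\<^sub>m 2 \<and> qd_block (transpose_mat G * Z * G)"
proof -
  define z00 where "z00 = Z $$ (0,0)"
  define z01 where "z01 = Z $$ (0,1)"
  define z10 where "z10 = Z $$ (1,0)"
  define z11 where "z11 = Z $$ (1,1)"
  have Zm: "Z = mat2 z00 z01 z10 z11" unfolding z00_def z01_def z10_def z11_def by (rule mat2_eta[OF Z])
  obtain p q where pq: "p^2 + q^2 = 1" and
    o: "(z00 * p + z01 * q) * (z01 * p - z00 * q) + (z10 * p + z11 * q) * (z11 * p - z10 * q) = 0" and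
    le: "(z01 * p - z00 * q)^2 + (z11 * p - z10 * q)^2 \<le> (z00 * p + z01 * q)^2 + (z10 * p + z11 * q)^2"
    using rotation_orthogonal_columns by blast
  define k10 where "k10 = z00 * p + z01 * q"
  define k11 where "k11 = z10 * p + z11 * q"
  define k20 where "k20 = z01 * p - z00 * q"
  define k21 where "k21 = z11 * p - z10 * q"
  define y00 where "y00 = p * k10 + q * k11"
  define y10 where "y10 = - q * k10 + p * k11"
  define y01 where "y01 = p * k20 + q * k21"
  define y11 where "y11 = - q * k20 + p * k21"
  have Y: "transpose_mat (mat2 p (-q) q p) * Z * mat2 p (-q) q p = mat2 y00 y01 y10 y11"
    unfolding Zm mat2_transpose mat2_mult y00_def y01_def y10_def y11_def k10_def k11_def k20_def k21_def
    by (simp add: algebra_simps)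
  have Y': "transpose_mat (mat2 p q q (-p)) * Z * mat2 p q q (-p) = mat2 y00 (-y01) (-y10) y11"
    unfolding Zm mat2_transpose mat2_mult y00_def y01_def y10_def y11_def k10_def k11_def k20_def k21_def
    by (simp add: algebra_simps)
  have G1: "transpose_mat (mat2 p (-q) q p) * mat2 p (-q) q p = 1\<^sub>m 2"
    unfolding mat2_transpose mat2_mult mat2_one using pq by (simp add: power2_eq_square algebra_simps)
  have G2: "transpose_mat (mat2 p q q (-p)) * mat2 p q q (-p) = 1\<^sub>m 2"
    unfolding mat2_transpose mat2_mult mat2_one using pq by (simp add: power2_eq_square algebra_simps)
  have yo: "y00 * y01 + y10 * y11 = (p^2 + q^2) * (k10 * k20 + k11 * k21)"
    unfolding y00_def y01_def y10_def y11_def by (simp add: algebra_simps power2_eq_square)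
  have yn1: "y00^2 + y10^2 = (p^2 + q^2) * (k10^2 + k11^2)"
    unfolding y00_def y10_def by (simp add: algebra_simps power2_eq_square)
  have yn2: "y01^2 + y11^2 = (p^2 + q^2) * (k20^2 + k21^2)"
    unfolding y01_def y11_def by (simp add: algebra_simps power2_eq_square)
  have yd: "y00 * y11 - y01 * y10 = (p^2 + q^2) * (p^2 + q^2) * (z00 * z11 - z01 * z10)"
    unfolding y00_def y01_def y10_def y11_def k10_def k11_def k20_def k21_def
    by (simp add: algebra_simps power2_eq_square)
  have c1: "y00 * y01 + y10 * y11 = 0" using yo o pq unfolding k10_def k11_def k20_def k21_def by simp
  have c2: "y01^2 + y11^2 \<le> y00^2 + y10^2" using yn1 yn2 le pq unfolding k10_def k11_def k20_def k21_def by simp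
  have c3: "y00 * y11 - y01 * y10 > 0" using yd pq det unfolding z00_def z01_def z10_def z11_def by simp
  obtain c s d1 d2 where cs: "c^2 + s^2 = 1" "d1 \<ge> d2" "d2 \<ge> 0"
    and ys: "y00 = c * d1" "y10 = - s * d1" "y01 = s * d2" "y11 = c * d2"
    using qd_factors_from_orthogonal_columns[OF c1 c2 c3] by blast
  show ?thesis
  proof (cases "s \<ge> 0")
    case True
    have "qd_block (transpose_mat (mat2 p (-q) q p) * Z * mat2 p (-q) q p)"
      unfolding Y ys using qd_block_mat2[OF cs(1) True cs(2,3)] by simp
    thus ?thesis using G1 by (intro exI[of _ "mat2 p (-q) q p"], auto)
  next
    case False
    have e: "transpose_mat (mat2 p q q (-p)) * Z * mat2 p q q (-p) = mat2 (c * d1) ((-s) * d2) (- (-s) * d1) (c * d2)"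
      unfolding Y' ys by simp
    have "qd_block (mat2 (c * d1) ((-s) * d2) (- (-s) * d1) (c * d2))"
      by (rule qd_block_mat2, insert cs False, auto)
    hence "qd_block (transpose_mat (mat2 p q q (-p)) * Z * mat2 p q q (-p))" unfolding e .
    thus ?thesis using G2 by (intro exI[of _ "mat2 p q q (-p)"], auto)
  qed
qed

section \<open>Orthogonal reduction to ordered real Schur form\<close>

abbreviation cmat :: "real mat \<Rightarrow> complex mat" where "cmat \<equiv> map_mat complex_of_real"

lemma eigenvalue_orthogonal_congruence:
  fixes M Q :: "real mat"
  assumes M: "M \<in> carrier_mat m m" and Q: "Q \<in> carrier_mat m m" and QQ: "transpose_mat Q * Q = 1\<^sub>m m"
    and ev: "eigenvalue (cmat (transpose_mat Q * M * Q)) \<nu>"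
  shows "eigenvalue (cmat M) \<nu>"
proof -
  have Qt: "transpose_mat Q \<in> carrier_mat m m" using Q by auto
  have QQt: "Q * transpose_mat Q = 1\<^sub>m m" by (rule mat_mult_left_right_inverse[OF Qt Q QQ])
  define R where "R = transpose_mat Q * M * Q"
  have R: "R \<in> carrier_mat m m" unfolding R_def using Q M by auto
  have QR: "Q * R = M * Q"
  proof -
    have "Q * R = (Q * transpose_mat Q) * (M * Q)" unfolding R_def using Q M
      by (simp add: assoc_mult_mat[of _ m m _ m _ m])
    thus ?thesis using QQt M Q by simp
  qed
  from ev obtain v where v: "v \<in> carrier_vec m" "v \<noteq> 0\<^sub>v m" "cmat R *\<^sub>v v = \<nu> \<cdot>\<^sub>v v"
    unfolding eigenvalue_def eigenvector_def R_def[symmetric] using R by auto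
  define w where "w = cmat Q *\<^sub>v v"
  have w: "w \<in> carrier_vec m" unfolding w_def using Q v by auto
  have "cmat M *\<^sub>v w = (cmat M * cmat Q) *\<^sub>v v" unfolding w_def using M Q v by simp
  also have "cmat M * cmat Q = cmat (M * Q)" by (rule of_real_hom.mat_hom_mult[OF M Q, symmetric])
  also have "\<dots> = cmat Q * cmat R" by (subst QR[symmetric], rule of_real_hom.mat_hom_mult[OF Q R])
  also have "(cmat Q * cmat R) *\<^sub>v v = cmat Q *\<^sub>v (\<nu> \<cdot>\<^sub>v v)" using Q R v by simp
  also have "\<dots> = \<nu> \<cdot>\<^sub>v w" unfolding w_def using Q v by (simp add: mult_mat_vec)
  finally have Mw: "cmat M *\<^sub>v w = \<nu> \<cdot>\<^sub>v w" .
  have "cmat (transpose_mat Q) *\<^sub>v w = cmat (transpose_mat Q * Q) *\<^sub>v v"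
    unfolding w_def of_real_hom.mat_hom_mult[OF Qt Q] by (rule assoc_mult_mat_vec[symmetric], insert Q v, auto)
  also have "\<dots> = v" unfolding QQ using v by (simp add: of_real_hom.mat_hom_one)
  finally have "w \<noteq> 0\<^sub>v m" using v Qt by auto
  thus ?thesis unfolding eigenvalue_def eigenvector_def using w Mw M by auto
qed

lemma eigenvalue_four_block_upper:
  fixes Y X W :: "real mat"
  assumes Y: "Y \<in> carrier_mat s s" and X: "X \<in> carrier_mat s r" and W: "W \<in> carrier_mat r r"
    and ev: "eigenvalue (cmat Y) \<nu> \<or> eigenvalue (cmat W) \<nu>"
  shows "eigenvalue (cmat (four_block_mat Y X (0\<^sub>m r s) W)) \<nu>"
proof -
  let ?R = "four_block_mat Y X (0\<^sub>m r s) W"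
  have R: "cmat ?R \<in> carrier_mat (s + r) (s + r)" using Y X W by auto
  have cY: "cmat Y \<in> carrier_mat s s" and cW: "cmat W \<in> carrier_mat r r" using Y W by auto
  have eq: "char_matrix (cmat ?R) \<nu> = four_block_mat (char_matrix (cmat Y) \<nu>) (cmat X) (0\<^sub>m r s) (char_matrix (cmat W) \<nu>)"
    by (rule eq_matI, insert Y X W, auto simp: char_matrix_def)
  have "det (char_matrix (cmat ?R) \<nu>) = det (char_matrix (cmat Y) \<nu>) * det (char_matrix (cmat W) \<nu>)"
    unfolding eq by (rule det_four_block_mat_lower_left_zero, insert Y X W, auto)
  moreover have "det (char_matrix (cmat Y) \<nu>) = 0 \<or> det (char_matrix (cmat W) \<nu>) = 0"
    using ev eigenvalue_det[OF cY] eigenvalue_det[OF cW] by auto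
  ultimately show ?thesis using eigenvalue_det[OF R] by auto
qed

lemma eigenvalue_1x1:
  fixes Z :: "real mat"
  assumes Z: "Z \<in> carrier_mat 1 1" and ev: "eigenvalue (cmat Z) \<nu>"
  shows "\<nu> = complex_of_real (Z $$ (0,0))"
proof -
  from ev obtain v where v: "v \<in> carrier_vec 1" "v \<noteq> 0\<^sub>v 1" "cmat Z *\<^sub>v v = \<nu> \<cdot>\<^sub>v v"
    unfolding eigenvalue_def eigenvector_def using Z by auto
  have v0: "v $ 0 \<noteq> 0" using v by (auto simp: vec_eq_iff less_Suc_eq)
  have "(cmat Z *\<^sub>v v) $ 0 = complex_of_real (Z $$ (0,0)) * v $ 0" using Z v(1) by (auto simp: scalar_prod_def)
  moreover have "(\<nu> \<cdot>\<^sub>v v) $ 0 = \<nu> * v $ 0" using v by auto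
  ultimately have "complex_of_real (Z $$ (0,0)) * v $ 0 = \<nu> * v $ 0" using v(3) by metis
  thus ?thesis using v0 by (metis mult_right_cancel)
qed

lemma mult_mat_vec2:
  fixes X :: "'a :: comm_ring_1 mat"
  assumes "X \<in> carrier_mat 2 2" "v \<in> carrier_vec 2"
  shows "(X *\<^sub>v v) $ 0 = X $$ (0,0) * v $ 0 + X $$ (0,1) * v $ 1"
    "(X *\<^sub>v v) $ 1 = X $$ (1,0) * v $ 0 + X $$ (1,1) * v $ 1"
  using assms by (auto simp: scalar_prod_def numeral_2_eq_2)

lemma eigenvalue_2x2:
  fixes Y :: "real mat"
  assumes Y: "Y \<in> carrier_mat 2 2" and tr: "Y $$ (0,0) + Y $$ (1,1) = 2 * a"
    and det: "Y $$ (0,0) * Y $$ (1,1) - Y $$ (0,1) * Y $$ (1,0) = a^2 + b^2"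
    and ev: "eigenvalue (cmat Y) \<nu>"
  shows "\<nu> = Complex a b \<or> \<nu> = Complex a (- b)"
proof -
  from ev obtain v where v: "v \<in> carrier_vec 2" "v \<noteq> 0\<^sub>v 2" "cmat Y *\<^sub>v v = \<nu> \<cdot>\<^sub>v v"
    unfolding eigenvalue_def eigenvector_def using Y by auto
  define y00 where "y00 = complex_of_real (Y $$ (0,0))"
  define y01 where "y01 = complex_of_real (Y $$ (0,1))"
  define y10 where "y10 = complex_of_real (Y $$ (1,0))"
  define y11 where "y11 = complex_of_real (Y $$ (1,1))"
  have cY: "cmat Y \<in> carrier_mat 2 2" using Y by auto
  have "(cmat Y *\<^sub>v v) $ 0 = (\<nu> \<cdot>\<^sub>v v) $ 0" "(cmat Y *\<^sub>v v) $ 1 = (\<nu> \<cdot>\<^sub>v v) $ 1" using v(3) by auto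
  hence e: "cmat Y $$ (0,0) * v $ 0 + cmat Y $$ (0,1) * v $ 1 = \<nu> * v $ 0"
     "cmat Y $$ (1,0) * v $ 0 + cmat Y $$ (1,1) * v $ 1 = \<nu> * v $ 1"
    unfolding mult_mat_vec2[OF cY v(1)] using v(1) by auto
  have e0: "y00 * v $ 0 + y01 * v $ 1 = \<nu> * v $ 0"
    using e(1) Y unfolding y00_def y01_def by auto
  have e1: "y10 * v $ 0 + y11 * v $ 1 = \<nu> * v $ 1"
    using e(2) Y unfolding y10_def y11_def by auto
  define cp where "cp = \<nu>^2 - (y00 + y11) * \<nu> + (y00 * y11 - y01 * y10)"
  have c0: "cp * v $ 0 = 0"
  proof -
    have "cp * v $ 0 = (y11 - \<nu>) * (y00 * v $ 0 + y01 * v $ 1 - \<nu> * v $ 0) - y01 * (y10 * v $ 0 + y11 * v $ 1 - \<nu> * v $ 1)"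
      unfolding cp_def by (simp add: algebra_simps power2_eq_square)
    thus ?thesis using e0 e1 by simp
  qed
  have c1: "cp * v $ 1 = 0"
  proof -
    have "cp * v $ 1 = (y00 - \<nu>) * (y10 * v $ 0 + y11 * v $ 1 - \<nu> * v $ 1) - y10 * (y00 * v $ 0 + y01 * v $ 1 - \<nu> * v $ 0)"
      unfolding cp_def by (simp add: algebra_simps power2_eq_square)
    thus ?thesis using e0 e1 by simp
  qed
  have "v $ 0 \<noteq> 0 \<or> v $ 1 \<noteq> 0"
  proof (rule ccontr)
    assume "\<not> ?thesis"
    hence "v = 0\<^sub>v 2" using v(1) by (auto simp: vec_eq_iff numeral_2_eq_2 less_Suc_eq)
    thus False using v by auto
  qed
  hence cp0: "cp = 0" using c0 c1 by auto
  have tr': "y00 + y11 = complex_of_real (2 * a)" unfolding y00_def y11_def using tr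
    by (metis of_real_add)
  have det': "y00 * y11 - y01 * y10 = complex_of_real (a^2 + b^2)" unfolding y00_def y11_def y01_def y10_def using det
    by (metis of_real_diff of_real_mult)
  have "(\<nu> - Complex a b) * (\<nu> - Complex a (- b)) = cp"
    unfolding cp_def tr' det'
    by (simp add: complex_eq_iff power2_eq_square algebra_simps)
  hence "(\<nu> - Complex a b) * (\<nu> - Complex a (- b)) = 0" using cp0 by simp
  thus ?thesis by auto
qed

lemma eigenvector_Re_Im:
  fixes M :: "real mat"
  assumes M: "M \<in> carrier_mat m m" and v: "v \<in> carrier_vec m" and Mv: "cmat M *\<^sub>v v = \<mu> \<cdot>\<^sub>v v"
  shows "M *\<^sub>v map_vec Re v = Re \<mu> \<cdot>\<^sub>v map_vec Re v - Im \<mu> \<cdot>\<^sub>v map_vec Im v"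
    and "M *\<^sub>v map_vec Im v = Im \<mu> \<cdot>\<^sub>v map_vec Re v + Re \<mu> \<cdot>\<^sub>v map_vec Im v"
proof -
  have ent: "(cmat M *\<^sub>v v) $ i = (\<Sum>j = 0..<m. complex_of_real (M $$ (i,j)) * v $ j)" if "i < m" for i
    using that M v by (auto simp: scalar_prod_def)
  have re: "Re ((cmat M *\<^sub>v v) $ i) = (M *\<^sub>v map_vec Re v) $ i" if "i < m" for i
    using ent[OF that] that M v by (auto simp: scalar_prod_def Re_sum)
  have im: "Im ((cmat M *\<^sub>v v) $ i) = (M *\<^sub>v map_vec Im v) $ i" if "i < m" for i
    using ent[OF that] that M v by (auto simp: scalar_prod_def Im_sum)
  show "M *\<^sub>v map_vec Re v = Re \<mu> \<cdot>\<^sub>v map_vec Re v - Im \<mu> \<cdot>\<^sub>v map_vec Im v"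
  proof (rule eq_vecI)
    fix i assume "i < dim_vec (Re \<mu> \<cdot>\<^sub>v map_vec Re v - Im \<mu> \<cdot>\<^sub>v map_vec Im v)"
    hence i: "i < m" using v by auto
    show "(M *\<^sub>v map_vec Re v) $ i = (Re \<mu> \<cdot>\<^sub>v map_vec Re v - Im \<mu> \<cdot>\<^sub>v map_vec Im v) $ i"
      using re[OF i] Mv i v by auto
  qed (insert M v, auto)
  show "M *\<^sub>v map_vec Im v = Im \<mu> \<cdot>\<^sub>v map_vec Re v + Re \<mu> \<cdot>\<^sub>v map_vec Im v"
  proof (rule eq_vecI)
    fix i assume "i < dim_vec (Im \<mu> \<cdot>\<^sub>v map_vec Re v + Re \<mu> \<cdot>\<^sub>v map_vec Im v)"
    hence i: "i < m" using v by auto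
    show "(M *\<^sub>v map_vec Im v) $ i = (Im \<mu> \<cdot>\<^sub>v map_vec Re v + Re \<mu> \<cdot>\<^sub>v map_vec Im v) $ i"
      using im[OF i] Mv i v by (auto simp: algebra_simps)
  qed (insert M v, auto)
qed

lemma Re_Im_vec_nonzero:
  fixes v :: "complex vec"
  assumes "v \<in> carrier_vec m" "v \<noteq> 0\<^sub>v m"
  shows "map_vec Re v \<noteq> 0\<^sub>v m \<or> map_vec Im v \<noteq> 0\<^sub>v m"
  using assms by (auto simp: vec_eq_iff complex_eq_iff)

lemma real_eigenvector_exists:
  fixes M :: "real mat"
  assumes M: "M \<in> carrier_mat m m" and ev: "eigenvalue (cmat M) \<mu>" and im: "Im \<mu> = 0"
  shows "\<exists>u \<in> carrier_vec m. u \<noteq> 0\<^sub>v m \<and> M *\<^sub>v u = Re \<mu> \<cdot>\<^sub>v u"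
proof -
  from ev obtain v where v: "v \<in> carrier_vec m" "v \<noteq> 0\<^sub>v m" "cmat M *\<^sub>v v = \<mu> \<cdot>\<^sub>v v"
    unfolding eigenvalue_def eigenvector_def using M by auto
  note ri = eigenvector_Re_Im[OF M v(1,3)]
  have 1: "M *\<^sub>v map_vec Re v = Re \<mu> \<cdot>\<^sub>v map_vec Re v" using ri(1) im v by (auto intro!: eq_vecI)
  have 2: "M *\<^sub>v map_vec Im v = Re \<mu> \<cdot>\<^sub>v map_vec Im v" using ri(2) im v by (auto intro!: eq_vecI)
  from Re_Im_vec_nonzero[OF v(1,2)] 1 2 v(1) show ?thesis by (metis map_carrier_vec)
qed

lemma rotation_pair_independent:
  fixes M :: "real mat" and x y :: "real vec"
  assumes M: "M \<in> carrier_mat m m" and x: "x \<in> carrier_vec m" and y: "y \<in> carrier_vec m"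
    and Mx: "M *\<^sub>v x = a \<cdot>\<^sub>v x - b \<cdot>\<^sub>v y" and My: "M *\<^sub>v y = b \<cdot>\<^sub>v x + a \<cdot>\<^sub>v y"
    and b: "b \<noteq> 0" and nz: "x \<noteq> 0\<^sub>v m \<or> y \<noteq> 0\<^sub>v m"
  shows "x \<noteq> 0\<^sub>v m" and "y \<noteq> k \<cdot>\<^sub>v x"
proof -
  have Mxi: "(M *\<^sub>v x) $ i = a * x $ i - b * y $ i" if "i < m" for i using Mx that x y by auto
  have Myi: "(M *\<^sub>v y) $ i = b * x $ i + a * y $ i" if "i < m" for i using My that x y by auto
  show x0: "x \<noteq> 0\<^sub>v m"
  proof
    assume x0: "x = 0\<^sub>v m"
    have "y $ i = 0" if i: "i < m" for i
    proof -
      have "(M *\<^sub>v x) $ i = 0" using x0 M i by (simp add: scalar_prod_def)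
      hence "b * y $ i = 0" using Mxi[OF i] x0 i by simp
      thus ?thesis using b by simp
    qed
    hence "y = 0\<^sub>v m" using y by (auto simp: vec_eq_iff)
    thus False using nz x0 by simp
  qed
  show "y \<noteq> k \<cdot>\<^sub>v x"
  proof
    assume yk: "y = k \<cdot>\<^sub>v x"
    have "x $ i = 0" if i: "i < m" for i
    proof -
      have "(M *\<^sub>v y) $ i = k * (M *\<^sub>v x) $ i" unfolding yk using M x i by (simp add: mult_mat_vec)
      hence "b * x $ i + a * (k * x $ i) = k * (a * x $ i - b * (k * x $ i))"
        using Myi[OF i] Mxi[OF i] yk i x by simp
      hence "b * (1 + k^2) * x $ i = 0" by (simp add: algebra_simps power2_eq_square)
      moreover have "1 + k^2 \<noteq> 0" by (smt (verit) zero_le_power2)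
      ultimately show ?thesis using b by simp
    qed
    hence "x = 0\<^sub>v m" using x by (auto simp: vec_eq_iff)
    thus False using x0 by simp
  qed
qed

text \<open>Gram--Schmidt on the real and imaginary parts \<open>x, y\<close> of an eigenvector for \<open>a + i b\<close>.\<close>
lemma invariant_plane_orthonormal_basis:
  fixes M :: "real mat" and x y :: "real vec"
  assumes M: "M \<in> carrier_mat m m" and x: "x \<in> carrier_vec m" and y: "y \<in> carrier_vec m"
    and Mx: "M *\<^sub>v x = a \<cdot>\<^sub>v x - b \<cdot>\<^sub>v y" and My: "M *\<^sub>v y = b \<cdot>\<^sub>v x + a \<cdot>\<^sub>v y"
    and b: "b \<noteq> 0" and nz: "x \<noteq> 0\<^sub>v m \<or> y \<noteq> 0\<^sub>v m"
  shows "\<exists>u1 u2 z11 z12 z21 z22. u1 \<in> carrier_vec m \<and> u2 \<in> carrier_vec m \<and>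
     u1 \<bullet> u1 = 1 \<and> u2 \<bullet> u2 = 1 \<and> u1 \<bullet> u2 = 0 \<and>
     M *\<^sub>v u1 = z11 \<cdot>\<^sub>v u1 + z21 \<cdot>\<^sub>v u2 \<and> M *\<^sub>v u2 = z12 \<cdot>\<^sub>v u1 + z22 \<cdot>\<^sub>v u2 \<and>
     z11 + z22 = 2 * a \<and> z11 * z22 - z12 * z21 = a^2 + b^2"
proof -
  note indep = rotation_pair_independent[OF assms]
  have Mxi: "(M *\<^sub>v x) $ i = a * x $ i - b * y $ i" if "i < m" for i using Mx that x y by auto
  have Myi: "(M *\<^sub>v y) $ i = b * x $ i + a * y $ i" if "i < m" for i using My that x y by auto
  define L where "L = sqrt (x \<bullet> x)"
  have xx: "x \<bullet> x > 0" by (rule scalar_prod_self_pos[OF x indep(1)])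
  have L: "L > 0" "L * L = x \<bullet> x" unfolding L_def using xx by (auto simp: real_sqrt_mult[symmetric])
  define u1 where "u1 = (1 / L) \<cdot>\<^sub>v x"
  have u1: "u1 \<in> carrier_vec m" unfolding u1_def using x by simp
  have u1i: "u1 $ i = x $ i / L" if "i < m" for i unfolding u1_def using that x by simp
  define p where "p = u1 \<bullet> y"
  define y' where "y' = y - p \<cdot>\<^sub>v u1"
  have y': "y' \<in> carrier_vec m" unfolding y'_def using y u1 by simp
  have y'i: "y' $ i = y $ i - p * x $ i / L" if "i < m" for i unfolding y'_def using that y u1 u1i by simp
  have y'0: "y' \<noteq> 0\<^sub>v m"
  proof
    assume "y' = 0\<^sub>v m"
    hence "y = (p / L) \<cdot>\<^sub>v x" using x y y'i by (auto simp: vec_eq_iff)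
    thus False using indep(2) by blast
  qed
  define q where "q = sqrt (y' \<bullet> y')"
  have yy: "y' \<bullet> y' > 0" by (rule scalar_prod_self_pos[OF y' y'0])
  have q: "q > 0" "q * q = y' \<bullet> y'" unfolding q_def using yy by (auto simp: real_sqrt_mult[symmetric])
  define u2 where "u2 = (1 / q) \<cdot>\<^sub>v y'"
  have u2: "u2 \<in> carrier_vec m" unfolding u2_def using y' by simp
  have u2i: "u2 $ i = (y $ i - p * x $ i / L) / q" if "i < m" for i unfolding u2_def using that y' y'i by simp
  have u1u1: "u1 \<bullet> u1 = 1" unfolding u1_def using x L xx by (simp add: scalar_prod_smult_distrib[of _ m])
  have u1y': "u1 \<bullet> y' = 0" unfolding y'_def p_def using u1 y u1u1
    by (simp add: scalar_prod_minus_distrib[of _ m] scalar_prod_smult_distrib[of _ m])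
  have u1u2: "u1 \<bullet> u2 = 0" unfolding u2_def using u1 y' u1y' by simp
  have u2u2: "u2 \<bullet> u2 = 1" unfolding u2_def using y' q yy by (simp add: scalar_prod_smult_distrib[of _ m])
  define z11 where "z11 = a - b * p / L"
  define z21 where "z21 = - b * q / L"
  define z12 where "z12 = (b * L + b * p^2 / L) / q"
  define z22 where "z22 = a + b * p / L"
  have Mu1i: "(M *\<^sub>v u1) $ i = (a * x $ i - b * y $ i) / L" if i: "i < m" for i
    unfolding u1_def using M x i Mxi[OF i] by (simp add: mult_mat_vec)
  have Mu2i: "(M *\<^sub>v u2) $ i = (b * x $ i + a * y $ i - p * ((a * x $ i - b * y $ i) / L)) / q" if i: "i < m" for i
  proof -
    have "M *\<^sub>v u2 = (1 / q) \<cdot>\<^sub>v (M *\<^sub>v y - p \<cdot>\<^sub>v (M *\<^sub>v u1))"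
      unfolding u2_def y'_def using M y u1 by (simp add: mult_mat_vec mult_minus_distrib_mat_vec)
    thus ?thesis using i M y u1 Myi[OF i] Mu1i[OF i] by simp
  qed
  have e1: "M *\<^sub>v u1 = z11 \<cdot>\<^sub>v u1 + z21 \<cdot>\<^sub>v u2"
  proof (rule eq_vecI)
    fix i assume "i < dim_vec (z11 \<cdot>\<^sub>v u1 + z21 \<cdot>\<^sub>v u2)"
    hence i: "i < m" using u1 u2 by simp
    have "(z11 \<cdot>\<^sub>v u1 + z21 \<cdot>\<^sub>v u2) $ i = z11 * (x $ i / L) + z21 * ((y $ i - p * x $ i / L) / q)"
      using i u1 u2 u1i[OF i] u2i[OF i] by simp
    also have "\<dots> = (a * x $ i - b * y $ i) / L" unfolding z11_def z21_def using L(1) q(1) by (simp add: field_simps)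
    finally show "(M *\<^sub>v u1) $ i = (z11 \<cdot>\<^sub>v u1 + z21 \<cdot>\<^sub>v u2) $ i" using Mu1i[OF i] by simp
  qed (insert M u1 u2, auto)
  have e2: "M *\<^sub>v u2 = z12 \<cdot>\<^sub>v u1 + z22 \<cdot>\<^sub>v u2"
  proof (rule eq_vecI)
    fix i assume "i < dim_vec (z12 \<cdot>\<^sub>v u1 + z22 \<cdot>\<^sub>v u2)"
    hence i: "i < m" using u1 u2 by simp
    have "(z12 \<cdot>\<^sub>v u1 + z22 \<cdot>\<^sub>v u2) $ i = z12 * (x $ i / L) + z22 * ((y $ i - p * x $ i / L) / q)"
      using i u1 u2 u1i[OF i] u2i[OF i] by simp
    also have "\<dots> = (b * x $ i + a * y $ i - p * ((a * x $ i - b * y $ i) / L)) / q"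
      unfolding z12_def z22_def using L(1) q(1) by (simp add: field_simps power2_eq_square)
    finally show "(M *\<^sub>v u2) $ i = (z12 \<cdot>\<^sub>v u1 + z22 \<cdot>\<^sub>v u2) $ i" using Mu2i[OF i] by simp
  qed (insert M u1 u2, auto)
  have tr: "z11 + z22 = 2 * a" unfolding z11_def z22_def by simp
  have det: "z11 * z22 - z12 * z21 = a^2 + b^2" unfolding z11_def z22_def z12_def z21_def
    using L(1) q(1) by (simp add: field_simps power2_eq_square)
  show ?thesis using u1 u2 u1u1 u2u2 u1u2 e1 e2 tr det by blast
qed

lemma four_block_mat_split_lower_zero:
  fixes R :: "'a :: zero mat"
  assumes R: "R \<in> carrier_mat m m" and s: "s \<le> m"
    and zero: "\<And>i j. s \<le> i \<Longrightarrow> i < m \<Longrightarrow> j < s \<Longrightarrow> R $$ (i,j) = 0"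
  shows "R = four_block_mat (mat s s (\<lambda>(i,j). R $$ (i,j))) (mat s (m - s) (\<lambda>(i,j). R $$ (i, j + s)))
      (0\<^sub>m (m - s) s) (mat (m - s) (m - s) (\<lambda>(i,j). R $$ (i + s, j + s)))" (is "R = ?F")
proof (rule eq_matI)
  fix i j assume "i < dim_row ?F" "j < dim_col ?F"
  hence "i < m" "j < m" using s by auto
  thus "R $$ (i,j) = ?F $$ (i,j)" using s zero[of i j] by auto
qed (use R s in auto)

lemma orthogonal_four_block_congruence:
  fixes M Q0 G Q' Z X W :: "real mat"
  assumes M: "M \<in> carrier_mat m m" and Q0: "Q0 \<in> carrier_mat m m" and QQ0: "transpose_mat Q0 * Q0 = 1\<^sub>m m"
    and s: "s \<le> m" and Z: "Z \<in> carrier_mat s s" and X: "X \<in> carrier_mat s (m - s)"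
    and W: "W \<in> carrier_mat (m - s) (m - s)"
    and R0eq: "transpose_mat Q0 * M * Q0 = four_block_mat Z X (0\<^sub>m (m - s) s) W"
    and G: "G \<in> carrier_mat s s" and GG: "transpose_mat G * G = 1\<^sub>m s"
    and Q': "Q' \<in> carrier_mat (m - s) (m - s)" and QQ': "transpose_mat Q' * Q' = 1\<^sub>m (m - s)"
  defines "D \<equiv> four_block_mat G (0\<^sub>m s (m - s)) (0\<^sub>m (m - s) s) Q'"
  shows "Q0 * D \<in> carrier_mat m m" "transpose_mat (Q0 * D) * (Q0 * D) = 1\<^sub>m m"
    "transpose_mat (Q0 * D) * M * (Q0 * D) =
       four_block_mat (transpose_mat G * Z * G) (transpose_mat G * X * Q') (0\<^sub>m (m - s) s) (transpose_mat Q' * W * Q')"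
proof -
  have ms: "s + (m - s) = m" using s by simp
  have D: "D \<in> carrier_mat m m" unfolding D_def using G Q' four_block_carrier_mat[OF G Q'] ms by simp
  have Dt: "transpose_mat D = four_block_mat (transpose_mat G) (0\<^sub>m s (m - s)) (0\<^sub>m (m - s) s) (transpose_mat Q')"
    unfolding D_def by (subst transpose_four_block_mat, insert G Q', auto)
  have DD: "transpose_mat D * D = 1\<^sub>m m"
  proof -
    have "transpose_mat D * D = four_block_mat (transpose_mat G * G + 0\<^sub>m s (m - s) * 0\<^sub>m (m - s) s)
      (transpose_mat G * 0\<^sub>m s (m - s) + 0\<^sub>m s (m - s) * Q')
      (0\<^sub>m (m - s) s * G + transpose_mat Q' * 0\<^sub>m (m - s) s)
      (0\<^sub>m (m - s) s * 0\<^sub>m s (m - s) + transpose_mat Q' * Q')"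
      unfolding Dt by (unfold D_def, rule mult_four_block_mat, insert G Q', auto)
    also have "\<dots> = four_block_mat (1\<^sub>m s) (0\<^sub>m s (m - s)) (0\<^sub>m (m - s) s) (1\<^sub>m (m - s))"
      using G Q' GG QQ' by simp
    finally show ?thesis using ms by simp
  qed
  show QD: "Q0 * D \<in> carrier_mat m m" using Q0 D by auto
  have tQD: "transpose_mat (Q0 * D) = transpose_mat D * transpose_mat Q0" by (rule transpose_mult[OF Q0 D])
  have "transpose_mat (Q0 * D) * (Q0 * D) = transpose_mat D * ((transpose_mat Q0 * Q0) * D)"
    unfolding tQD using Q0 D by (simp add: assoc_mult_mat[of _ m m _ m _ m])
  also have "\<dots> = 1\<^sub>m m" using QQ0 DD D by simp
  finally show "transpose_mat (Q0 * D) * (Q0 * D) = 1\<^sub>m m" .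
  have "transpose_mat (Q0 * D) * M * (Q0 * D) = transpose_mat D * (transpose_mat Q0 * M * Q0) * D"
    unfolding tQD using Q0 D M by (simp add: assoc_mult_mat[of _ m m _ m _ m])
  also have "transpose_mat D * (transpose_mat Q0 * M * Q0) =
      four_block_mat (transpose_mat G * Z + 0\<^sub>m s (m - s) * 0\<^sub>m (m - s) s)
      (transpose_mat G * X + 0\<^sub>m s (m - s) * W)
      (0\<^sub>m (m - s) s * Z + transpose_mat Q' * 0\<^sub>m (m - s) s)
      (0\<^sub>m (m - s) s * X + transpose_mat Q' * W)"
    unfolding Dt R0eq by (rule mult_four_block_mat, insert G Q' Z X W, auto)
  also have "\<dots> = four_block_mat (transpose_mat G * Z) (transpose_mat G * X) (0\<^sub>m (m - s) s) (transpose_mat Q' * W)"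
    using G Q' Z X W by simp
  also have "\<dots> * D = four_block_mat (transpose_mat G * Z * G + transpose_mat G * X * 0\<^sub>m (m - s) s)
      (transpose_mat G * Z * 0\<^sub>m s (m - s) + transpose_mat G * X * Q')
      (0\<^sub>m (m - s) s * G + transpose_mat Q' * W * 0\<^sub>m (m - s) s)
      (0\<^sub>m (m - s) s * 0\<^sub>m s (m - s) + transpose_mat Q' * W * Q')"
    unfolding D_def by (rule mult_four_block_mat, insert G Q' Z X W, auto)
  also have "\<dots> = four_block_mat (transpose_mat G * Z * G) (transpose_mat G * X * Q') (0\<^sub>m (m - s) s) (transpose_mat Q' * W * Q')"
    using G Q' Z X W by simp
  finally show "transpose_mat (Q0 * D) * M * (Q0 * D) =
       four_block_mat (transpose_mat G * Z * G) (transpose_mat G * X * Q') (0\<^sub>m (m - s) s) (transpose_mat Q' * W * Q')" .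
qed

lemma pos_def_form_one: "pos_def_form m (1\<^sub>m m)"
  by (unfold_locales, auto intro: scalar_prod_self_pos)

lemma ip_one: "x \<in> carrier_vec m \<Longrightarrow> y \<in> carrier_vec m \<Longrightarrow> pos_def_form.ip (1\<^sub>m m) x y = x \<bullet> y"
  by (simp add: pos_def_form.ip_def[OF pos_def_form_one])

lemma orthonormal_completion:
  fixes us :: "real vec list"
  assumes us: "set us \<subseteq> carrier_vec m" and len: "length us \<le> m"
    and on: "\<And>i j. i < length us \<Longrightarrow> j < length us \<Longrightarrow> us ! i \<bullet> us ! j = (if i = j then 1 else 0)"
  shows "\<exists>Q. Q \<in> carrier_mat m m \<and> transpose_mat Q * Q = 1\<^sub>m m \<and> (\<forall>j < length us. col Q j = us ! j)"
proof -
  interpret eucl: pos_def_form m "1\<^sub>m m" by (rule pos_def_form_one)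
  have dist: "distinct us"
  proof (rule distinct_conv_nth[THEN iffD2], intro allI impI)
    fix i j assume ij: "i < length us" "j < length us" "i \<noteq> j"
    show "us ! i \<noteq> us ! j"
    proof
      assume "us ! i = us ! j"
      hence "us ! i \<bullet> us ! j = us ! j \<bullet> us ! j" by simp
      thus False using on[of i j] on[of j j] ij by simp
    qed
  qed
  have o: "eucl.orthonormal us" unfolding eucl.orthonormal_def
  proof (intro conjI ballI dist us)
    fix s s' assume ss: "s \<in> set us" "s' \<in> set us"
    then obtain i j where ij: "i < length us" "j < length us" "s = us ! i" "s' = us ! j" by (metis in_set_conv_nth)
    have "eucl.ip s s' = s \<bullet> s'" using ip_one ss us by auto
    also have "\<dots> = (if s = s' then 1 else 0)" using on[OF ij(1,2)] ij dist by (auto simp: nth_eq_iff_index_eq)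
    finally show "eucl.ip s s' = (if s = s' then 1 else 0)" .
  qed
  obtain qs where qs: "eucl.orthonormal qs" "length qs = m" "take (length us) qs = us"
    using eucl.orthonormal_extend_constrained[of us "\<lambda>_. 0\<^sub>v m", OF o len] by auto
  define Q where "Q = mat_of_cols m qs"
  note om = eucl.orthonormal_basis_mat[OF qs(1,2), folded Q_def]
  have qc: "\<And>j. j < m \<Longrightarrow> qs ! j \<in> carrier_vec m" using qs unfolding eucl.orthonormal_def by (auto dest: nth_mem)
  have "col Q j = us ! j" if j: "j < length us" for j
  proof -
    have "col Q j = qs ! j" unfolding Q_def using j len qs(2) qc by simp
    also have "\<dots> = take (length us) qs ! j" using j by simp
    finally show ?thesis using qs(3) by simp
  qed
  thus ?thesis using om(1,2) by auto
qed

lemma orthogonal_deflation: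
  fixes M :: "real mat" and us :: "real vec list"
  assumes M: "M \<in> carrier_mat m m" and us: "set us \<subseteq> carrier_vec m" and len: "length us \<le> m"
    and on: "\<And>i j. i < length us \<Longrightarrow> j < length us \<Longrightarrow> us ! i \<bullet> us ! j = (if i = j then 1 else 0)"
    and inv: "\<And>x j. x \<in> carrier_vec m \<Longrightarrow> (\<forall>i < length us. x \<bullet> us ! i = 0) \<Longrightarrow> j < length us \<Longrightarrow>
      x \<bullet> (M *\<^sub>v us ! j) = 0"
  defines "s \<equiv> length us"
  shows "\<exists>Q X W. Q \<in> carrier_mat m m \<and> transpose_mat Q * Q = 1\<^sub>m m \<and>
     X \<in> carrier_mat s (m - s) \<and> W \<in> carrier_mat (m - s) (m - s) \<and>
     transpose_mat Q * M * Q = four_block_mat (mat s s (\<lambda>(i,j). us ! i \<bullet> (M *\<^sub>v us ! j))) X (0\<^sub>m (m - s) s) W"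
proof -
  obtain Q where Q: "Q \<in> carrier_mat m m" "transpose_mat Q * Q = 1\<^sub>m m"
    and colQ: "\<And>j. j < s \<Longrightarrow> col Q j = us ! j"
    using orthonormal_completion[OF us len on] unfolding s_def by auto
  define R where "R = transpose_mat Q * M * Q"
  have R: "R \<in> carrier_mat m m" unfolding R_def using Q M by auto
  have Rij: "R $$ (i,j) = col Q i \<bullet> (M *\<^sub>v col Q j)" if "i < m" "j < m" for i j
    unfolding R_def by (rule index_congruence_mat[OF Q(1) M that])
  have cols: "col Q i \<bullet> col Q j = (if i = j then 1 else 0)" if "i < m" "j < m" for i j
  proof -
    have "col Q i \<bullet> col Q j = (transpose_mat Q * Q) $$ (i,j)" using Q(1) that by simp
    also have "\<dots> = (if i = j then 1 else 0)" unfolding Q(2) using that by simp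
    finally show ?thesis .
  qed
  have zero: "R $$ (i,j) = 0" if ij: "s \<le> i" "i < m" "j < s" for i j
  proof -
    have "col Q i \<bullet> us ! k = 0" if "k < s" for k
      using cols[of i k] colQ[OF that] that ij len unfolding s_def by auto
    hence "col Q i \<bullet> (M *\<^sub>v us ! j) = 0" using inv[of "col Q i" j] Q ij unfolding s_def by auto
    thus ?thesis using Rij ij colQ len unfolding s_def by auto
  qed
  have top: "mat s s (\<lambda>(i,j). R $$ (i,j)) = mat s s (\<lambda>(i,j). us ! i \<bullet> (M *\<^sub>v us ! j))"
    using Rij colQ len unfolding s_def by (auto intro!: eq_matI)
  have "R = four_block_mat (mat s s (\<lambda>(i,j). R $$ (i,j))) (mat s (m - s) (\<lambda>(i,j). R $$ (i, j + s)))
      (0\<^sub>m (m - s) s) (mat (m - s) (m - s) (\<lambda>(i,j). R $$ (i + s, j + s)))"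
    by (rule four_block_mat_split_lower_zero[OF R _ zero]) (use len in \<open>simp add: s_def\<close>)
  hence "R = four_block_mat (mat s s (\<lambda>(i,j). us ! i \<bullet> (M *\<^sub>v us ! j))) (mat s (m - s) (\<lambda>(i,j). R $$ (i, j + s)))
      (0\<^sub>m (m - s) s) (mat (m - s) (m - s) (\<lambda>(i,j). R $$ (i + s, j + s)))"
    unfolding top .
  moreover have "mat s (m - s) (\<lambda>(i,j). R $$ (i, j + s)) \<in> carrier_mat s (m - s)"
    and "mat (m - s) (m - s) (\<lambda>(i,j). R $$ (i + s, j + s)) \<in> carrier_mat (m - s) (m - s)" by auto
  ultimately show ?thesis using Q unfolding R_def by blast
qed

text \<open>The last conjunct is an induction invariant: it holds for every block triangular matrix,
  but carrying it along avoids a determinant argument for general block structures.\<close>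
definition schur_qd :: "nat \<Rightarrow> nat \<Rightarrow> real mat \<Rightarrow> bool" where
  "schur_qd m l R \<longleftrightarrow> ordered_real_schur m l R \<and> (\<forall>k<l. qd_block (diag_block R l k)) \<and>
     (\<forall>k<m - l. \<forall>\<nu>. block_eigenvalue R l k \<nu> \<longrightarrow> eigenvalue (cmat R) \<nu>)"

lemma schur_qd_empty: "M \<in> carrier_mat 0 0 \<Longrightarrow> schur_qd 0 0 M"
  unfolding schur_qd_def ordered_real_schur_def real_schur_blocks_def ordered_blocks_def by auto

lemma blk_Suc_ge2:
  assumes "2 \<le> i" shows "blk (Suc l') i = Suc (blk l' (i - 2))"
  using assms unfolding blk_def by (auto simp: less_diff_conv div_if)

lemma blk_Suc_less2: "i < 2 \<Longrightarrow> blk (Suc l') i = 0"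
  unfolding blk_def by auto

lemma index_four_block_mat_lower_zero:
  fixes Y X' R' :: "'a :: zero mat"
  assumes Y: "Y \<in> carrier_mat s s" and X': "X' \<in> carrier_mat s (m - s)" and R': "R' \<in> carrier_mat (m - s) (m - s)"
    and s: "s \<le> m" and ij: "i < m" "j < m"
  shows "four_block_mat Y X' (0\<^sub>m (m - s) s) R' $$ (i,j) =
     (if i < s then (if j < s then Y $$ (i,j) else X' $$ (i, j - s)) else (if j < s then 0 else R' $$ (i - s, j - s)))"
  using assms by (subst index_mat_four_block, auto)

lemma diag_block_prepend_2x2:
  fixes Y X' R' :: "real mat"
  assumes Y: "Y \<in> carrier_mat 2 2" and X': "X' \<in> carrier_mat 2 (m - 2)" and R': "R' \<in> carrier_mat (m - 2) (m - 2)"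
    and m: "2 \<le> m" and l'm: "2 * l' \<le> m - 2"
  defines "R \<equiv> four_block_mat Y X' (0\<^sub>m (m - 2) 2) R'"
  shows "diag_block R (Suc l') 0 = Y"
    and "1 \<le> k \<Longrightarrow> k < m - Suc l' \<Longrightarrow> diag_block R (Suc l') k = diag_block R' l' (k - 1)"
proof -
  have Rij: "R $$ (i,j) = (if i < 2 then (if j < 2 then Y $$ (i,j) else X' $$ (i, j - 2))
     else (if j < 2 then 0 else R' $$ (i - 2, j - 2)))" if "i < m" "j < m" for i j
    unfolding R_def by (rule index_four_block_mat_lower_zero[OF Y X' R' m that])
  show "diag_block R (Suc l') 0 = Y"
    unfolding diag_block_def by (rule eq_matI, insert Y m Rij, auto)
  assume k: "1 \<le> k" "k < m - Suc l'"
  show "diag_block R (Suc l') k = diag_block R' l' (k - 1)"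
  proof (cases "k < Suc l'")
    case True
    have "R $$ (2 * k + i, 2 * k + j) = R' $$ (2 * (k - 1) + i, 2 * (k - 1) + j)" if ij: "i < 2" "j < 2" for i j
    proof -
      have "2 * k + i < m" "2 * k + j < m" using True ij l'm m by auto
      moreover have "2 * k + i - 2 = 2 * (k - 1) + i" "2 * k + j - 2 = 2 * (k - 1) + j" using k by auto
      ultimately show ?thesis using Rij k by auto
    qed
    moreover have "k - 1 < l'" using True k by auto
    ultimately show ?thesis using True unfolding diag_block_def by (auto intro!: eq_matI)
  next
    case False
    have "k + Suc l' < m" "k + Suc l' - 2 = k - 1 + l'" using k False by auto
    hence "R $$ (k + Suc l', k + Suc l') = R' $$ (k - 1 + l', k - 1 + l')" using Rij False by auto
    thus ?thesis using False unfolding diag_block_def by (auto intro!: eq_matI)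
  qed
qed

lemma diag_block_prepend_1x1:
  fixes Y X' R' :: "real mat"
  assumes Y: "Y \<in> carrier_mat 1 1" and X': "X' \<in> carrier_mat 1 (m - 1)" and R': "R' \<in> carrier_mat (m - 1) (m - 1)"
    and m: "1 \<le> m"
  defines "R \<equiv> four_block_mat Y X' (0\<^sub>m (m - 1) 1) R'"
  shows "diag_block R 0 0 = Y"
    and "1 \<le> k \<Longrightarrow> k < m \<Longrightarrow> diag_block R 0 k = diag_block R' 0 (k - 1)"
proof -
  have Rij: "R $$ (i,j) = (if i < 1 then (if j < 1 then Y $$ (i,j) else X' $$ (i, j - 1))
     else (if j < 1 then 0 else R' $$ (i - 1, j - 1)))" if "i < m" "j < m" for i j
    unfolding R_def by (rule index_four_block_mat_lower_zero[OF Y X' R' m that])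
  show "diag_block R 0 0 = Y"
    unfolding diag_block_def by (rule eq_matI, insert Y m Rij, auto)
  assume "1 \<le> k" "k < m"
  hence "R $$ (k, k) = R' $$ (k - 1, k - 1)" using Rij by auto
  thus "diag_block R 0 k = diag_block R' 0 (k - 1)" unfolding diag_block_def by (auto intro!: eq_matI)
qed

lemma block_lower_zero_prepend_2x2:
  fixes Y X' R' :: "real mat"
  assumes Y: "Y \<in> carrier_mat 2 2" and X': "X' \<in> carrier_mat 2 (m - 2)" and R': "R' \<in> carrier_mat (m - 2) (m - 2)"
    and m: "2 \<le> m" and z': "\<And>i j. i < m - 2 \<Longrightarrow> j < m - 2 \<Longrightarrow> blk l' j < blk l' i \<Longrightarrow> R' $$ (i,j) = 0"
    and ij: "i < m" "j < m" "blk (Suc l') j < blk (Suc l') i"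
  shows "four_block_mat Y X' (0\<^sub>m (m - 2) 2) R' $$ (i,j) = 0"
proof -
  note Rij = index_four_block_mat_lower_zero[OF Y X' R' m ij(1,2)]
  have i2: "2 \<le> i" using ij(3) blk_Suc_less2[of i l'] by (cases "i < 2") auto
  show ?thesis
  proof (cases "j < 2")
    case True thus ?thesis using Rij i2 by auto
  next
    case False
    hence "blk l' (j - 2) < blk l' (i - 2)" using ij(3) blk_Suc_ge2[of i l'] blk_Suc_ge2[of j l'] i2 by auto
    thus ?thesis using Rij ij i2 False z' by auto
  qed
qed

lemma block_lower_zero_prepend_1x1:
  fixes Y X' R' :: "real mat"
  assumes Y: "Y \<in> carrier_mat 1 1" and X': "X' \<in> carrier_mat 1 (m - 1)" and R': "R' \<in> carrier_mat (m - 1) (m - 1)"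
    and m: "1 \<le> m" and z': "\<And>i j. i < m - 1 \<Longrightarrow> j < m - 1 \<Longrightarrow> j < i \<Longrightarrow> R' $$ (i,j) = 0"
    and ij: "i < m" "j < m" "j < i"
  shows "four_block_mat Y X' (0\<^sub>m (m - 1) 1) R' $$ (i,j) = 0"
  using index_four_block_mat_lower_zero[OF Y X' R' m ij(1,2)] z'[of "i - 1" "j - 1"] ij by auto

lemma schur_qd_prepend_nonreal:
  fixes Y X' R' :: "real mat"
  assumes Y: "Y \<in> carrier_mat 2 2" and X': "X' \<in> carrier_mat 2 (m - 2)" and R': "R' \<in> carrier_mat (m - 2) (m - 2)"
    and m: "2 \<le> m" and schur_qd': "schur_qd (m - 2) l' R'" and qdY: "qd_block Y"
    and Yev: "\<And>\<nu>. eigenvalue (cmat Y) \<nu> \<Longrightarrow> Im \<nu> \<noteq> 0 \<and> cmod \<nu> = r \<and> Re \<nu> = re"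
    and minim: "\<And>\<nu>. eigenvalue (cmat (four_block_mat Y X' (0\<^sub>m (m - 2) 2) R')) \<nu> \<Longrightarrow> Im \<nu> \<noteq> 0 \<Longrightarrow>
        r \<le> cmod \<nu> \<and> (r = cmod \<nu> \<longrightarrow> Re \<nu> \<le> re)"
  shows "schur_qd m (Suc l') (four_block_mat Y X' (0\<^sub>m (m - 2) 2) R')"
proof -
  define R where "R = four_block_mat Y X' (0\<^sub>m (m - 2) 2) R'"
  define l where "l = Suc l'"
  from schur_qd'[unfolded schur_qd_def ordered_real_schur_def real_schur_blocks_def]
  have l'm: "2 * l' \<le> m - 2"
    and z': "\<And>i j. i < m - 2 \<Longrightarrow> j < m - 2 \<Longrightarrow> blk l' j < blk l' i \<Longrightarrow> R' $$ (i,j) = 0"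
    and nr': "\<And>k \<nu>. k < l' \<Longrightarrow> block_eigenvalue R' l' k \<nu> \<Longrightarrow> Im \<nu> \<noteq> 0"
    and ob': "ordered_blocks (m - 2) l' R'"
    and qd': "\<And>k. k < l' \<Longrightarrow> qd_block (diag_block R' l' k)"
    and ev': "\<And>k \<nu>. k < m - 2 - l' \<Longrightarrow> block_eigenvalue R' l' k \<nu> \<Longrightarrow> eigenvalue (cmat R') \<nu>"
    by auto
  note diag = diag_block_prepend_2x2[OF Y X' R' m l'm, folded R_def l_def]
  have lm: "2 * l \<le> m" unfolding l_def using l'm m by auto
  have Rc: "R \<in> carrier_mat m m" unfolding R_def using Y R' m by auto
  have evY: "eigenvalue (cmat R) \<nu>" if "eigenvalue (cmat Y) \<nu>" for \<nu>
    unfolding R_def using eigenvalue_four_block_upper[OF Y X' R'] that by auto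
  have evR': "eigenvalue (cmat R) \<nu>" if "eigenvalue (cmat R') \<nu>" for \<nu>
    unfolding R_def using eigenvalue_four_block_upper[OF Y X' R'] that by auto
  have dk: "diag_block R l k = diag_block R' l' (k - 1)" if "1 \<le> k" "k < m - l" for k
    using diag(2) that by simp
  have bk: "block_eigenvalue R l k \<nu> \<longleftrightarrow> block_eigenvalue R' l' (k - 1) \<nu>" if "1 \<le> k" "k < m - l" for k \<nu>
    unfolding block_eigenvalue_def using dk[OF that] by simp
  have b0: "block_eigenvalue R l 0 \<nu> \<longleftrightarrow> eigenvalue (cmat Y) \<nu>" for \<nu>
    unfolding block_eigenvalue_def diag(1) ..
  have rs: "real_schur_blocks m l R"
    unfolding real_schur_blocks_def
  proof (intro conjI allI impI Rc lm)
    fix i j assume "i < m" "j < m" "blk l j < blk l i"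
    thus "R $$ (i,j) = 0"
      using block_lower_zero_prepend_2x2[OF Y X' R' m z'] unfolding R_def l_def by blast
  next
    fix k \<nu> assume k: "k < l" and ev: "block_eigenvalue R l k \<nu>"
    show "Im \<nu> \<noteq> 0"
    proof (cases "k = 0")
      case True thus ?thesis using ev b0 Yev by auto
    next
      case False
      hence "block_eigenvalue R' l' (k - 1) \<nu>" "k - 1 < l'" using bk[of k \<nu>] ev k lm unfolding l_def by auto
      thus ?thesis using nr' by auto
    qed
  qed
  have ob: "ordered_blocks m l R"
    unfolding ordered_blocks_def
  proof (intro allI impI)
    fix i j \<mu>i \<mu>j
    assume ij: "(i < j \<and> j < l) \<or> (l \<le> i \<and> i < j \<and> j < m - l)"
      and ei: "block_eigenvalue R l i \<mu>i" and ej: "block_eigenvalue R l j \<mu>j"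
    have jm: "j < m - l" "1 \<le> j" using ij lm by auto
    have ej': "block_eigenvalue R' l' (j - 1) \<mu>j" using bk[OF jm(2,1)] ej by auto
    show "cmod \<mu>i \<le> cmod \<mu>j \<and> (cmod \<mu>i = cmod \<mu>j \<longrightarrow> Re \<mu>j \<le> Re \<mu>i)"
    proof (cases "i = 0")
      case True
      hence jl: "j < l" using ij unfolding l_def by auto
      have "j - 1 < l'" using jl jm unfolding l_def by auto
      hence nrj: "Im \<mu>j \<noteq> 0" using nr' ej' by auto
      have "j - 1 < m - 2 - l'" using jl l'm jm m unfolding l_def by auto
      hence "eigenvalue (cmat R) \<mu>j" using ev' ej' evR' by auto
      from minim[OF this[unfolded R_def] nrj] have "r \<le> cmod \<mu>j \<and> (r = cmod \<mu>j \<longrightarrow> Re \<mu>j \<le> re)" .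
      moreover have "cmod \<mu>i = r \<and> Re \<mu>i = re" using Yev ei True b0 by auto
      ultimately show ?thesis by auto
    next
      case False
      have ei': "block_eigenvalue R' l' (i - 1) \<mu>i" using bk[of i] ei False ij lm by auto
      have "(i - 1 < j - 1 \<and> j - 1 < l') \<or> (l' \<le> i - 1 \<and> i - 1 < j - 1 \<and> j - 1 < m - 2 - l')"
        using ij False unfolding l_def by auto
      thus ?thesis using ob'[unfolded ordered_blocks_def] ei' ej' by blast
    qed
  qed
  have qd: "\<forall>k<l. qd_block (diag_block R l k)"
  proof (intro allI impI)
    fix k assume k: "k < l"
    show "qd_block (diag_block R l k)"
    proof (cases "k = 0")
      case True thus ?thesis using diag(1) qdY by simp
    next
      case False
      hence "diag_block R l k = diag_block R' l' (k - 1)" "k - 1 < l'" using dk[of k] k lm unfolding l_def by auto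
      thus ?thesis using qd' by simp
    qed
  qed
  have ev: "\<forall>k<m - l. \<forall>\<nu>. block_eigenvalue R l k \<nu> \<longrightarrow> eigenvalue (cmat R) \<nu>"
  proof (intro allI impI)
    fix k \<nu> assume k: "k < m - l" and e: "block_eigenvalue R l k \<nu>"
    show "eigenvalue (cmat R) \<nu>"
    proof (cases "k = 0")
      case True thus ?thesis using e b0 evY by auto
    next
      case False
      hence "block_eigenvalue R' l' (k - 1) \<nu>" "k - 1 < m - 2 - l'" using bk[of k] e k unfolding l_def by auto
      thus ?thesis using ev' evR' by auto
    qed
  qed
  show ?thesis using rs ob qd ev unfolding schur_qd_def ordered_real_schur_def R_def l_def by auto
qed


lemma schur_qd_prepend_real:
  fixes Y X' R' :: "real mat"
  assumes Y: "Y \<in> carrier_mat 1 1" and X': "X' \<in> carrier_mat 1 (m - 1)" and R': "R' \<in> carrier_mat (m - 1) (m - 1)"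
    and m: "1 \<le> m" and schur_qd': "schur_qd (m - 1) l' R'"
    and allreal: "\<And>\<nu>. eigenvalue (cmat (four_block_mat Y X' (0\<^sub>m (m - 1) 1) R')) \<nu> \<Longrightarrow> Im \<nu> = 0"
    and minim: "\<And>\<nu>. eigenvalue (cmat (four_block_mat Y X' (0\<^sub>m (m - 1) 1) R')) \<nu> \<Longrightarrow>
        \<bar>Y $$ (0,0)\<bar> \<le> cmod \<nu> \<and> (\<bar>Y $$ (0,0)\<bar> = cmod \<nu> \<longrightarrow> Re \<nu> \<le> Y $$ (0,0))"
  shows "schur_qd m 0 (four_block_mat Y X' (0\<^sub>m (m - 1) 1) R')"
proof -
  define R where "R = four_block_mat Y X' (0\<^sub>m (m - 1) 1) R'"
  from schur_qd'[unfolded schur_qd_def ordered_real_schur_def real_schur_blocks_def]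
  have l'm: "2 * l' \<le> m - 1"
    and z': "\<And>i j. i < m - 1 \<Longrightarrow> j < m - 1 \<Longrightarrow> blk l' j < blk l' i \<Longrightarrow> R' $$ (i,j) = 0"
    and nr': "\<And>k \<nu>. k < l' \<Longrightarrow> block_eigenvalue R' l' k \<nu> \<Longrightarrow> Im \<nu> \<noteq> 0"
    and ob': "ordered_blocks (m - 1) l' R'"
    and ev': "\<And>k \<nu>. k < m - 1 - l' \<Longrightarrow> block_eigenvalue R' l' k \<nu> \<Longrightarrow> eigenvalue (cmat R') \<nu>"
    by auto
  have Rc: "R \<in> carrier_mat m m" unfolding R_def using Y R' m by auto
  have evY: "eigenvalue (cmat R) \<nu>" if "eigenvalue (cmat Y) \<nu>" for \<nu>
    unfolding R_def using eigenvalue_four_block_upper[OF Y X' R'] that by auto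
  have evR': "eigenvalue (cmat R) \<nu>" if "eigenvalue (cmat R') \<nu>" for \<nu>
    unfolding R_def using eigenvalue_four_block_upper[OF Y X' R'] that by auto
  have l'0: "l' = 0"
  proof (rule ccontr)
    assume "l' \<noteq> 0"
    hence l'p: "0 < l'" by auto
    define B where "B = diag_block R' l' 0"
    have B: "cmat B \<in> carrier_mat 2 2" unfolding B_def diag_block_def using l'p by auto
    obtain \<nu> where "\<nu> \<in> spectrum (cmat B)" using spectrum_non_empty[OF B] by auto
    hence be: "block_eigenvalue R' l' 0 \<nu>" unfolding spectrum_def block_eigenvalue_def B_def by auto
    have "Im \<nu> \<noteq> 0" using nr'[OF l'p be] .
    moreover have "0 < m - 1 - l'" using l'm l'p by auto
    hence "eigenvalue (cmat R') \<nu>" using ev'[OF _ be] by simp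
    hence "eigenvalue (cmat R) \<nu>" using evR' by auto
    ultimately show False using allreal unfolding R_def by auto
  qed
  have blk0: "blk 0 i = i" for i unfolding blk_def by auto
  note diag = diag_block_prepend_1x1[OF Y X' R' m, folded R_def]
  have bk: "block_eigenvalue R 0 k \<nu> \<longleftrightarrow> block_eigenvalue R' 0 (k - 1) \<nu>" if "1 \<le> k" "k < m" for k \<nu>
    unfolding block_eigenvalue_def using diag(2)[OF that] by simp
  have b0: "block_eigenvalue R 0 0 \<nu> \<longleftrightarrow> eigenvalue (cmat Y) \<nu>" for \<nu>
    unfolding block_eigenvalue_def diag(1) ..
  have rs: "real_schur_blocks m 0 R"
    unfolding real_schur_blocks_def
  proof (intro conjI allI impI Rc)
    fix i j assume "i < m" "j < m" "blk 0 j < blk 0 i"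
    thus "R $$ (i,j) = 0"
      using block_lower_zero_prepend_1x1[OF Y X' R' m z'[unfolded l'0 blk0]] unfolding R_def blk0 by blast
  qed auto
  have ob: "ordered_blocks m 0 R"
    unfolding ordered_blocks_def
  proof (intro allI impI)
    fix i j \<mu>i \<mu>j
    assume ij: "(i < j \<and> j < 0) \<or> (0 \<le> i \<and> i < j \<and> j < m - 0)"
      and ei: "block_eigenvalue R 0 i \<mu>i" and ej: "block_eigenvalue R 0 j \<mu>j"
    have jm: "j < m" "1 \<le> j" using ij by auto
    have ej': "block_eigenvalue R' 0 (j - 1) \<mu>j" using bk[OF jm(2,1)] ej by auto
    show "cmod \<mu>i \<le> cmod \<mu>j \<and> (cmod \<mu>i = cmod \<mu>j \<longrightarrow> Re \<mu>j \<le> Re \<mu>i)"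
    proof (cases "i = 0")
      case True
      have "j - 1 < m - 1 - l'" using jm l'0 by auto
      hence "eigenvalue (cmat R) \<mu>j" using ev' ej' evR' l'0 by auto
      from minim[OF this[unfolded R_def]]
      have "\<bar>Y $$ (0,0)\<bar> \<le> cmod \<mu>j \<and> (\<bar>Y $$ (0,0)\<bar> = cmod \<mu>j \<longrightarrow> Re \<mu>j \<le> Y $$ (0,0))" .
      moreover have "\<mu>i = complex_of_real (Y $$ (0,0))" using eigenvalue_1x1[OF Y] ei True b0 by auto
      ultimately show ?thesis by auto
    next
      case False
      have ei': "block_eigenvalue R' 0 (i - 1) \<mu>i" using bk[of i] ei False ij by auto
      have "(0 \<le> i - 1 \<and> i - 1 < j - 1 \<and> j - 1 < m - 1 - 0)"
        using ij False by auto
      thus ?thesis using ob'[unfolded ordered_blocks_def l'0] ei' ej' by blast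
    qed
  qed
  have ev: "\<forall>k<m - 0. \<forall>\<nu>. block_eigenvalue R 0 k \<nu> \<longrightarrow> eigenvalue (cmat R) \<nu>"
  proof (intro allI impI)
    fix k \<nu> assume k: "k < m - 0" and e: "block_eigenvalue R 0 k \<nu>"
    show "eigenvalue (cmat R) \<nu>"
    proof (cases "k = 0")
      case True thus ?thesis using e b0 evY by auto
    next
      case False
      hence "block_eigenvalue R' l' (k - 1) \<nu>" "k - 1 < m - 1 - l'" using bk[of k] e k l'0 by auto
      thus ?thesis using ev' evR' by auto
    qed
  qed
  show ?thesis using rs ob ev unfolding schur_qd_def ordered_real_schur_def R_def by auto
qed


lemma least_modulus_greatest_Re:
  fixes S :: "complex set"
  assumes "finite S" "S \<noteq> {}"
  shows "\<exists>\<mu>\<in>S. \<forall>\<nu>\<in>S. cmod \<mu> \<le> cmod \<nu> \<and> (cmod \<mu> = cmod \<nu> \<longrightarrow> Re \<nu> \<le> Re \<mu>)"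
proof -
  define r where "r = Min (cmod ` S)"
  define S0 where "S0 = {\<nu>\<in>S. cmod \<nu> = r}"
  have "r \<in> cmod ` S" unfolding r_def using assms by auto
  hence S0ne: "S0 \<noteq> {}" unfolding S0_def by auto
  have S0f: "finite S0" unfolding S0_def using assms by auto
  define t where "t = Max (Re ` S0)"
  have "t \<in> Re ` S0" unfolding t_def using S0ne S0f by auto
  then obtain \<mu> where mu: "\<mu> \<in> S0" "Re \<mu> = t" by auto
  have "\<forall>\<nu>\<in>S. cmod \<mu> \<le> cmod \<nu> \<and> (cmod \<mu> = cmod \<nu> \<longrightarrow> Re \<nu> \<le> Re \<mu>)"
  proof
    fix \<nu> assume nu: "\<nu> \<in> S"
    have "cmod \<mu> = r" using mu unfolding S0_def by auto
    moreover have "r \<le> cmod \<nu>" unfolding r_def using nu assms by auto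
    moreover have "cmod \<nu> = r \<Longrightarrow> Re \<nu> \<le> t" unfolding t_def using nu S0f unfolding S0_def by auto
    ultimately show "cmod \<mu> \<le> cmod \<nu> \<and> (cmod \<mu> = cmod \<nu> \<longrightarrow> Re \<nu> \<le> Re \<mu>)" using mu by auto
  qed
  thus ?thesis using mu unfolding S0_def by auto
qed

lemma orthonormal_pair_dim_ge2:
  fixes u1 u2 :: "real vec"
  assumes "u1 \<in> carrier_vec m" "u2 \<in> carrier_vec m" "u1 \<bullet> u1 = 1" "u2 \<bullet> u2 = 1" "u1 \<bullet> u2 = 0" "0 < m"
  shows "2 \<le> m"
proof (rule ccontr)
  assume "\<not> 2 \<le> m"
  hence m1: "m = 1" using assms by auto
  have "u1 \<bullet> u1 = u1 $ 0 * u1 $ 0" "u2 \<bullet> u2 = u2 $ 0 * u2 $ 0" "u1 \<bullet> u2 = u1 $ 0 * u2 $ 0"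
    using assms m1 by (auto simp: scalar_prod_def)
  thus False using assms by auto
qed

abbreviation schur_qd_reducible :: "nat \<Rightarrow> real mat \<Rightarrow> bool" where
  "schur_qd_reducible m M \<equiv>
     \<exists>Q l. Q \<in> carrier_mat m m \<and> transpose_mat Q * Q = 1\<^sub>m m \<and> schur_qd m l (transpose_mat Q * M * Q)"

lemma schur_qd_block_reduction:
  fixes M G :: "real mat" and us :: "real vec list" and s :: nat
  defines "Z \<equiv> mat s s (\<lambda>(i,j). us ! i \<bullet> (M *\<^sub>v us ! j))"
  assumes M: "M \<in> carrier_mat m m" and us: "set us \<subseteq> carrier_vec m"
    and len_us: "length us = s" and len: "s \<le> m"
    and on: "\<And>i j. i < s \<Longrightarrow> j < s \<Longrightarrow> us ! i \<bullet> us ! j = (if i = j then 1 else 0)"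
    and inv: "\<And>x j. x \<in> carrier_vec m \<Longrightarrow> (\<forall>i < s. x \<bullet> us ! i = 0) \<Longrightarrow> j < s \<Longrightarrow>
      x \<bullet> (M *\<^sub>v us ! j) = 0"
    and G: "G \<in> carrier_mat s s" and GG: "transpose_mat G * G = 1\<^sub>m s"
    and IH: "\<And>W. W \<in> carrier_mat (m - s) (m - s) \<Longrightarrow> schur_qd_reducible (m - s) W"
  shows "\<exists>Q X' R' l'. Q \<in> carrier_mat m m \<and> transpose_mat Q * Q = 1\<^sub>m m \<and>
     X' \<in> carrier_mat s (m - s) \<and> R' \<in> carrier_mat (m - s) (m - s) \<and> schur_qd (m - s) l' R' \<and>
     transpose_mat Q * M * Q = four_block_mat (transpose_mat G * Z * G) X' (0\<^sub>m (m - s) s) R'"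
proof -
  obtain Q0 X W where Q0: "Q0 \<in> carrier_mat m m" "transpose_mat Q0 * Q0 = 1\<^sub>m m"
    and X: "X \<in> carrier_mat s (m - s)" and W: "W \<in> carrier_mat (m - s) (m - s)"
    and R0: "transpose_mat Q0 * M * Q0 = four_block_mat Z X (0\<^sub>m (m - s) s) W"
    using orthogonal_deflation[OF M us, unfolded len_us, OF len on inv] unfolding Z_def by blast
  obtain Q' l' where Q': "Q' \<in> carrier_mat (m - s) (m - s)" "transpose_mat Q' * Q' = 1\<^sub>m (m - s)"
    and schur': "schur_qd (m - s) l' (transpose_mat Q' * W * Q')"
    using IH[OF W] by blast
  have Z: "Z \<in> carrier_mat s s" unfolding Z_def by simp
  define D where "D = four_block_mat G (0\<^sub>m s (m - s)) (0\<^sub>m (m - s) s) Q'"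
  note cb = orthogonal_four_block_congruence[OF M Q0 len Z X W R0 G GG Q', folded D_def]
  have "transpose_mat G * X * Q' \<in> carrier_mat s (m - s)" using G X Q' by auto
  moreover have "transpose_mat Q' * W * Q' \<in> carrier_mat (m - s) (m - s)" using W Q' by auto
  ultimately show ?thesis using cb schur' by blast
qed

lemma schur_qd_step_nonreal:
  fixes M :: "real mat"
  assumes M: "M \<in> carrier_mat m m" and ev: "eigenvalue (cmat M) \<mu>" and im: "Im \<mu> \<noteq> 0"
    and least: "\<And>\<nu>. eigenvalue (cmat M) \<nu> \<Longrightarrow> Im \<nu> \<noteq> 0 \<Longrightarrow>
      cmod \<mu> \<le> cmod \<nu> \<and> (cmod \<mu> = cmod \<nu> \<longrightarrow> Re \<nu> \<le> Re \<mu>)"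
    and IH: "\<And>W. W \<in> carrier_mat (m - 2) (m - 2) \<Longrightarrow> schur_qd_reducible (m - 2) W"
  shows "schur_qd_reducible m M"
proof -
  define a b where "a = Re \<mu>" and "b = Im \<mu>"
  from ev obtain v where v: "v \<in> carrier_vec m" "v \<noteq> 0\<^sub>v m" "cmat M *\<^sub>v v = \<mu> \<cdot>\<^sub>v v"
    unfolding eigenvalue_def eigenvector_def using M by auto
  have m0: "0 < m" using v by (cases m) auto
  obtain u1 u2 z11 z12 z21 z22 where u: "u1 \<in> carrier_vec m" "u2 \<in> carrier_vec m"
    "u1 \<bullet> u1 = 1" "u2 \<bullet> u2 = 1" "u1 \<bullet> u2 = 0"
    and Mu1: "M *\<^sub>v u1 = z11 \<cdot>\<^sub>v u1 + z21 \<cdot>\<^sub>v u2" and Mu2: "M *\<^sub>v u2 = z12 \<cdot>\<^sub>v u1 + z22 \<cdot>\<^sub>v u2"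
    and tr: "z11 + z22 = 2 * a" and det: "z11 * z22 - z12 * z21 = a^2 + b^2"
    using invariant_plane_orthonormal_basis[OF M _ _ eigenvector_Re_Im[OF M v(1,3), folded a_def b_def]
        im[folded b_def] Re_Im_vec_nonzero[OF v(1,2)]] v(1) by auto
  have m2: "2 \<le> m" by (rule orthonormal_pair_dim_ge2[OF u m0])
  define us where "us = [u1, u2]"
  have u21: "u2 \<bullet> u1 = 0" using u comm_scalar_prod[of u1 m u2] by auto
  have usc: "set us \<subseteq> carrier_vec m" unfolding us_def using u by auto
  have len_us: "length us = 2" unfolding us_def by simp
  have uson: "us ! i \<bullet> us ! j = (if i = j then 1 else 0)" if "i < 2" "j < 2" for i j
    using that u u21 unfolding us_def by (auto simp: less_Suc_eq numeral_2_eq_2)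
  have inv: "x \<bullet> (M *\<^sub>v us ! j) = 0" if x: "x \<in> carrier_vec m" "\<forall>i < 2. x \<bullet> us ! i = 0" and j: "j < 2" for x j
  proof -
    have "x \<bullet> u1 = 0" "x \<bullet> u2 = 0" using x(2)[rule_format, of 0] x(2)[rule_format, of 1] unfolding us_def by auto
    hence "x \<bullet> (M *\<^sub>v u1) = 0" "x \<bullet> (M *\<^sub>v u2) = 0"
      using x(1) u unfolding Mu1 Mu2 by (simp_all add: scalar_prod_add_distrib[of _ m])
    thus ?thesis using j unfolding us_def by (auto simp: less_Suc_eq numeral_2_eq_2)
  qed
  define Z where "Z = mat 2 2 (\<lambda>(i,j). us ! i \<bullet> (M *\<^sub>v us ! j))"
  have Zm: "Z = mat2 z11 z12 z21 z22"
    unfolding Z_def by (rule mat2_eqI, insert u u21 Mu1 Mu2, auto simp: us_def scalar_prod_add_distrib[of _ m])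
  have Zc: "Z \<in> carrier_mat 2 2" unfolding Zm by simp
  have detZ: "Z $$ (0,0) * Z $$ (1,1) - Z $$ (0,1) * Z $$ (1,0) > 0"
    unfolding Zm using det im unfolding b_def by (simp add: add_nonneg_pos)
  obtain G where G: "G \<in> carrier_mat 2 2" "transpose_mat G * G = 1\<^sub>m 2" and qdG: "qd_block (transpose_mat G * Z * G)"
    using qd_block_orthogonal_similar[OF Zc detZ] by auto
  obtain Q X' R' l' where Q: "Q \<in> carrier_mat m m" "transpose_mat Q * Q = 1\<^sub>m m"
    and X': "X' \<in> carrier_mat 2 (m - 2)" and R': "R' \<in> carrier_mat (m - 2) (m - 2)" and schur': "schur_qd (m - 2) l' R'"
    and QMQ: "transpose_mat Q * M * Q = four_block_mat (transpose_mat G * Z * G) X' (0\<^sub>m (m - 2) 2) R'"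
    using schur_qd_block_reduction[OF M usc len_us m2 uson inv G IH, folded Z_def] by blast
  have "schur_qd m (Suc l') (transpose_mat Q * M * Q)"
    unfolding QMQ
  proof (rule schur_qd_prepend_nonreal[OF _ X' R' m2 schur' qdG, where r = "cmod \<mu>" and re = "Re \<mu>"])
    show "transpose_mat G * Z * G \<in> carrier_mat 2 2" using G Zc by auto
  next
    fix \<nu> assume "eigenvalue (cmat (transpose_mat G * Z * G)) \<nu>"
    hence evZ: "eigenvalue (cmat Z) \<nu>" using eigenvalue_orthogonal_congruence[OF Zc G] by auto
    have "\<nu> = Complex a b \<or> \<nu> = Complex a (- b)"
      by (rule eigenvalue_2x2[OF Zc _ _ evZ]) (simp_all add: Zm tr det)
    thus "Im \<nu> \<noteq> 0 \<and> cmod \<nu> = cmod \<mu> \<and> Re \<nu> = Re \<mu>"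
      using im unfolding a_def b_def by (auto simp: cmod_def)
  next
    fix \<nu> assume ev\<nu>: "eigenvalue (cmat (four_block_mat (transpose_mat G * Z * G) X' (0\<^sub>m (m - 2) 2) R')) \<nu>"
      and im\<nu>: "Im \<nu> \<noteq> 0"
    have "eigenvalue (cmat M) \<nu>"
      by (rule eigenvalue_orthogonal_congruence[OF M Q]) (use ev\<nu> in \<open>simp add: QMQ\<close>)
    thus "cmod \<mu> \<le> cmod \<nu> \<and> (cmod \<mu> = cmod \<nu> \<longrightarrow> Re \<nu> \<le> Re \<mu>)" using least im\<nu> by blast
  qed
  thus ?thesis using Q by blast
qed

lemma schur_qd_step_real:
  fixes M :: "real mat"
  assumes M: "M \<in> carrier_mat m m" and ev: "eigenvalue (cmat M) \<mu>"
    and real: "\<And>\<nu>. eigenvalue (cmat M) \<nu> \<Longrightarrow> Im \<nu> = 0"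
    and least: "\<And>\<nu>. eigenvalue (cmat M) \<nu> \<Longrightarrow> cmod \<mu> \<le> cmod \<nu> \<and> (cmod \<mu> = cmod \<nu> \<longrightarrow> Re \<nu> \<le> Re \<mu>)"
    and IH: "\<And>W. W \<in> carrier_mat (m - 1) (m - 1) \<Longrightarrow> schur_qd_reducible (m - 1) W"
  shows "schur_qd_reducible m M"
proof -
  obtain u where u: "u \<in> carrier_vec m" "u \<noteq> 0\<^sub>v m" "M *\<^sub>v u = Re \<mu> \<cdot>\<^sub>v u"
    using real_eigenvector_exists[OF M ev real[OF ev]] by auto
  have m1: "1 \<le> m" using u by (cases m) auto
  define N where "N = sqrt (u \<bullet> u)"
  have uu: "u \<bullet> u > 0" by (rule scalar_prod_self_pos[OF u(1,2)])
  have N: "N > 0" "N * N = u \<bullet> u" unfolding N_def using uu by (auto simp: real_sqrt_mult[symmetric])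
  define u1 where "u1 = (1 / N) \<cdot>\<^sub>v u"
  have u1c: "u1 \<in> carrier_vec m" unfolding u1_def using u by auto
  have u1u1: "u1 \<bullet> u1 = 1" unfolding u1_def using u N uu by (simp add: scalar_prod_smult_distrib[of _ m])
  have Mu1: "M *\<^sub>v u1 = Re \<mu> \<cdot>\<^sub>v u1" unfolding u1_def using M u
    by (simp add: mult_mat_vec smult_smult_assoc mult.commute)
  define us where "us = [u1]"
  have usc: "set us \<subseteq> carrier_vec m" unfolding us_def using u1c by simp
  have len_us: "length us = 1" unfolding us_def by simp
  have uson: "us ! i \<bullet> us ! j = (if i = j then 1 else 0)" if "i < 1" "j < 1" for i j
    using that u1u1 unfolding us_def by auto
  have inv: "x \<bullet> (M *\<^sub>v us ! j) = 0" if "x \<in> carrier_vec m" "\<forall>i < 1. x \<bullet> us ! i = 0" "j < 1" for x j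
    using that u1c Mu1 unfolding us_def by auto
  define Z where "Z = mat 1 1 (\<lambda>(i,j). us ! i \<bullet> (M *\<^sub>v us ! j))"
  have Zc: "Z \<in> carrier_mat 1 1" unfolding Z_def by auto
  have Z00: "Z $$ (0,0) = Re \<mu>" unfolding Z_def us_def using u1c u1u1 Mu1 by auto
  have G: "1\<^sub>m 1 \<in> carrier_mat 1 1" "transpose_mat (1\<^sub>m 1) * 1\<^sub>m 1 = (1\<^sub>m 1 :: real mat)" by auto
  obtain Q X' R' l' where Q: "Q \<in> carrier_mat m m" "transpose_mat Q * Q = 1\<^sub>m m"
    and X': "X' \<in> carrier_mat 1 (m - 1)" and R': "R' \<in> carrier_mat (m - 1) (m - 1)" and schur': "schur_qd (m - 1) l' R'"
    and QMQ: "transpose_mat Q * M * Q = four_block_mat (transpose_mat (1\<^sub>m 1) * Z * 1\<^sub>m 1) X' (0\<^sub>m (m - 1) 1) R'"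
    using schur_qd_block_reduction[OF M usc len_us m1 uson inv G IH, folded Z_def] by blast
  have QMQ': "transpose_mat Q * M * Q = four_block_mat Z X' (0\<^sub>m (m - 1) 1) R'"
    using QMQ Zc by simp
  have eigM: "eigenvalue (cmat M) \<nu>" if "eigenvalue (cmat (transpose_mat Q * M * Q)) \<nu>" for \<nu>
    using eigenvalue_orthogonal_congruence[OF M Q that] .
  have "schur_qd m 0 (transpose_mat Q * M * Q)"
    unfolding QMQ'
  proof (rule schur_qd_prepend_real[OF Zc X' R' m1 schur'])
    fix \<nu> assume "eigenvalue (cmat (four_block_mat Z X' (0\<^sub>m (m - 1) 1) R')) \<nu>"
    hence ev\<nu>: "eigenvalue (cmat M) \<nu>" using eigM unfolding QMQ' by blast
    show "Im \<nu> = 0" using real[OF ev\<nu>] .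
    show "\<bar>Z $$ (0,0)\<bar> \<le> cmod \<nu> \<and> (\<bar>Z $$ (0,0)\<bar> = cmod \<nu> \<longrightarrow> Re \<nu> \<le> Z $$ (0,0))"
      using least[OF ev\<nu>] real[OF ev] unfolding Z00 by (auto simp: cmod_def)
  qed
  thus ?thesis using Q by blast
qed

text \<open>Induction on the dimension: deflate an invariant plane of a non-real eigenvalue of least
  modulus (largest real part among those), or, if the spectrum is real, an eigenvector of least
  modulus; this choice makes the diagonal blocks come out in the required order.\<close>
lemma schur_qd_exists:
  fixes M :: "real mat"
  assumes "M \<in> carrier_mat m m"
  shows "schur_qd_reducible m M"
  using assms
proof (induction m arbitrary: M rule: less_induct)
  case (less m M)
  show ?case
  proof (cases "m = 0")
    case True
    have "transpose_mat (1\<^sub>m 0) * M * 1\<^sub>m 0 = M" using less.prems True by simp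
    thus ?thesis using schur_qd_empty[of M] less.prems True by (intro exI[of _ "1\<^sub>m 0"] exI[of _ 0]) auto
  next
    case False
    define E where "E = {\<nu>. eigenvalue (cmat M) \<nu>}"
    have cM: "cmat M \<in> carrier_mat m m" using less.prems by auto
    have finE: "finite E" using card_finite_spectrum(1)[OF cM] unfolding E_def spectrum_def .
    have neE: "E \<noteq> {}" using spectrum_non_empty[OF cM] False unfolding E_def spectrum_def by auto
    have IH: "schur_qd_reducible (m - k) W" if "0 < k" "W \<in> carrier_mat (m - k) (m - k)" for k W
      using less.IH[of "m - k" W] that False by auto
    show ?thesis
    proof (cases "\<exists>\<nu>\<in>E. Im \<nu> \<noteq> 0")
      case True
      have "finite {\<nu>\<in>E. Im \<nu> \<noteq> 0}" "{\<nu>\<in>E. Im \<nu> \<noteq> 0} \<noteq> {}" using finE True by auto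
      from least_modulus_greatest_Re[OF this] obtain \<mu> where \<mu>: "\<mu> \<in> E" "Im \<mu> \<noteq> 0"
        and least: "\<forall>\<nu>\<in>{\<nu>\<in>E. Im \<nu> \<noteq> 0}. cmod \<mu> \<le> cmod \<nu> \<and> (cmod \<mu> = cmod \<nu> \<longrightarrow> Re \<nu> \<le> Re \<mu>)"
        by auto
      show ?thesis
      proof (rule schur_qd_step_nonreal[OF less.prems _ \<mu>(2)])
        show "eigenvalue (cmat M) \<mu>" using \<mu> unfolding E_def by simp
      next
        fix \<nu> assume "eigenvalue (cmat M) \<nu>" "Im \<nu> \<noteq> 0"
        thus "cmod \<mu> \<le> cmod \<nu> \<and> (cmod \<mu> = cmod \<nu> \<longrightarrow> Re \<nu> \<le> Re \<mu>)" using least unfolding E_def by simp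
      qed (use IH[of 2] in simp)
    next
      case False
      from least_modulus_greatest_Re[OF finE neE] obtain \<mu> where \<mu>: "\<mu> \<in> E"
        and least: "\<forall>\<nu>\<in>E. cmod \<mu> \<le> cmod \<nu> \<and> (cmod \<mu> = cmod \<nu> \<longrightarrow> Re \<nu> \<le> Re \<mu>)"
        by auto
      show ?thesis
      proof (rule schur_qd_step_real[OF less.prems])
        show "eigenvalue (cmat M) \<mu>" using \<mu> unfolding E_def by simp
      next
        fix \<nu> assume "eigenvalue (cmat M) \<nu>"
        thus "Im \<nu> = 0" "cmod \<mu> \<le> cmod \<nu> \<and> (cmod \<mu> = cmod \<nu> \<longrightarrow> Re \<nu> \<le> Re \<mu>)"
          using False least unfolding E_def by auto
      qed (use IH[of 1] in simp)
    qed
  qed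
qed

lemma ordered_schur_similar_exists:
  fixes A C :: "real mat"
  assumes d: "1 \<le> d" "d \<le> n" and A: "A \<in> carrier_mat n n" and C: "C \<in> carrier_mat d n"
    and st: "stable_mat A" and obs: "observable n A C"
  shows "\<exists>A3 C3 l. A3 \<in> carrier_mat n n \<and> C3 \<in> carrier_mat d n \<and>
            similar_pair n A C A3 C3 \<and> output_normal n A3 C3 \<and>
            ordered_real_schur n l A3 \<and> (\<forall>k<l. qd_block (diag_block A3 l k))"
proof -
  have n: "0 < n" using d by auto
  let ?G = "obs_gramian n A C"
  have Gc: "?G \<in> carrier_mat n n" by (rule obs_gramian_carrier)
  interpret gram: pos_def_form n ?G by (rule pos_def_form_obs_gramian[OF A C st obs])
  have o0: "gram.orthonormal []" unfolding gram.orthonormal_def by auto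
  from gram.orthonormal_extend_constrained[of "[]" "\<lambda>_. 0\<^sub>v n", OF o0] obtain ts where o: "gram.orthonormal ts" and len: "length ts = n"
    by auto
  define T1 where "T1 = mat_of_cols n ts"
  note om = gram.orthonormal_basis_mat[OF o len, folded T1_def]
  have T1: "T1 \<in> carrier_mat n n" by (rule om(1))
  have TGT: "transpose_mat T1 * ?G * T1 = 1\<^sub>m n" by (rule om(2))
  define A1 where "A1 = transpose_mat T1 * ?G * A * T1"
  have A1: "A1 \<in> carrier_mat n n" unfolding A1_def using T1 Gc A by auto
  obtain Q l where Q: "Q \<in> carrier_mat n n" "transpose_mat Q * Q = 1\<^sub>m n"
    and schur: "schur_qd n l (transpose_mat Q * A1 * Q)" using schur_qd_exists[OF A1] by auto
  define T where "T = T1 * Q"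
  have T: "T \<in> carrier_mat n n" unfolding T_def using T1 Q by auto
  have tT: "transpose_mat T = transpose_mat Q * transpose_mat T1" unfolding T_def by (rule transpose_mult[OF T1 Q(1)])
  have "transpose_mat T * ?G * T = transpose_mat Q * (transpose_mat T1 * ?G * T1) * Q"
    unfolding tT unfolding T_def using T1 Q Gc by (simp add: assoc_mult_mat[of _ n n _ n _ n])
  also have "\<dots> = 1\<^sub>m n" unfolding TGT using Q by simp
  finally have TGT': "transpose_mat T * ?G * T = 1\<^sub>m n" .
  have A3eq: "transpose_mat T * ?G * A * T = transpose_mat Q * A1 * Q"
    unfolding tT unfolding T_def A1_def using T1 Q Gc A by (simp add: assoc_mult_mat[of _ n n _ n _ n])
  from output_normal_congruence[OF A C Gc obs_gramian_sym[OF A C] obs_gramian_stein[OF A C st n] T TGT']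
  have sim: "similar_pair n A C (transpose_mat Q * A1 * Q) (C * T)"
    and on: "output_normal n (transpose_mat Q * A1 * Q) (C * T)" unfolding A3eq by auto
  show ?thesis
    by (rule exI[of _ "transpose_mat Q * A1 * Q"], rule exI[of _ "C * T"], rule exI[of _ l],
      insert sim on schur Q A1 C T, auto simp: schur_qd_def)
qed

theorem theorem3p5:
  fixes n d :: nat and A C :: "real mat"
  assumes "1 \<le> d" and "d \<le> n"
    and "A \<in> carrier_mat n n" and "C \<in> carrier_mat d n"
    and "stable_mat A"
    and "observable n A C"
  shows "(\<exists>A1 C1. A1 \<in> carrier_mat n n \<and> C1 \<in> carrier_mat d n \<and>
            similar_pair n A C A1 C1 \<and> OTSON n d A1 C1) \<and>
         (\<exists>A2 C2. A2 \<in> carrier_mat n n \<and> C2 \<in> carrier_mat d n \<and>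
            similar_pair n A C A2 C2 \<and> HOON n A2 C2) \<and>
         (\<exists>A3 C3 l. A3 \<in> carrier_mat n n \<and> C3 \<in> carrier_mat d n \<and>
            similar_pair n A C A3 C3 \<and> output_normal n A3 C3 \<and>
            ordered_real_schur n l A3 \<and> (\<forall>k<l. qd_block (diag_block A3 l k)))"
  using OTSON_similar_exists[OF assms] HOON_similar_exists[OF assms] ordered_schur_similar_exists[OF assms] by blast

end
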